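(* \textsc{IN3DM} reduces to \textsc{Position Matching} in polynomial time.
   Context: \textsc{IN3DM}: given a multiset of positive integers $A=\{a_1,\dots,a_n\}$, the set $B=\{1,\dots,n\}$ and a multiset of positive integers $T=\{t_1,\dots,t_n\}$, decide whether there is $M\subseteq A\times B\times T$ in which every element of $A$, $B$, $T$ occurs exactly once and every triple $(a,b,t)\in M$ satisfies $a+b\ge t$. The discretized sequence $\langle a_1,\dots,a_n\rangle$ of a non-decreasing sequence $\langle d_1,\dots,d_n\rangle$ is given by $a_n=d_n$, $a_i=\min\{a_{i+1}-1,d_i\}$ for $i<n$. \textsc{Position Matching}: given a non-decreasing sequence $D=\langle d_1,\dots,d_n\rangle$ of positive integers, its discretized sequence $A=\langle a_1,\dots,a_n\rangle$, and a set $T$ of $n$ distinct positive integers, decide whether there is $M\subseteq D\times A\times T$ in which every element of $D$, $A$, $T$ occurs exactly once and every triple $(d,a,t)\in M$ satisfies $d\ge a$ and $d+a\ge t$. *)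

theory Defs
  imports Main "HOL-Library.Multiset"
begin

text \<open>IN3DM instance: lists a = (a_1..a_n), t = (t_1..t_n) of positive integers
 (the multisets A and T); B = {1..n}.\<close>

definition in3dm_inst :: "nat list \<Rightarrow> nat list \<Rightarrow> bool" where
  "in3dm_inst a t \<longleftrightarrow> length a = length t \<and> (\<forall>x\<in>set a. 0 < x) \<and> (\<forall>x\<in>set t. 0 < x)"

definition in3dm :: "nat list \<Rightarrow> nat list \<Rightarrow> bool" where
  "in3dm a t \<longleftrightarrow> (\<exists>M :: (nat \<times> nat \<times> nat) multiset.
      image_mset fst M = mset a \<and>
      image_mset (fst \<circ> snd) M = mset [1..<Suc (length a)] \<and>
      image_mset (snd \<circ> snd) M = mset t \<and>
      (\<forall>(x, y, z) \<in># M. z \<le> x + y))"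

text \<open>Discretized sequence: a_n = d_n, a_i = min (a_(i+1) - 1) d_i (values may be \<le> 0).\<close>

definition discretize :: "int list \<Rightarrow> int list" where
  "discretize ds = foldr (\<lambda>d acc. case acc of [] \<Rightarrow> [d] | x # _ \<Rightarrow> min (x - 1) d # acc) ds []"

definition pm_inst :: "nat list \<Rightarrow> nat list \<Rightarrow> bool" where
  "pm_inst D T \<longleftrightarrow> length D = length T \<and> sorted D \<and> (\<forall>d\<in>set D. 0 < d) \<and>
      distinct T \<and> (\<forall>x\<in>set T. 0 < x)"

definition pos_match :: "nat list \<Rightarrow> nat list \<Rightarrow> bool" where
  "pos_match D T \<longleftrightarrow> (\<exists>M :: (int \<times> int \<times> int) multiset.
      image_mset fst M = mset (map int D) \<and>
      image_mset (fst \<circ> snd) M = mset (discretize (map int D)) \<and>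
      image_mset (snd \<circ> snd) M = mset (map int T) \<and>
      (\<forall>(d, x, y) \<in># M. x \<le> d \<and> y \<le> d + x))"

text \<open>Without multiplication this model is polynomially equivalent
 to Turing machines.\<close>

datatype aexp = N nat | Mem aexp | Plus aexp aexp | Minus aexp aexp

primrec aval :: "aexp \<Rightarrow> (nat \<Rightarrow> nat) \<Rightarrow> nat" where
  "aval (N c) m = c"
| "aval (Mem e) m = m (aval e m)"
| "aval (Plus e1 e2) m = aval e1 m + aval e2 m"
| "aval (Minus e1 e2) m = aval e1 m - aval e2 m"

datatype com = SKIP | Assign aexp aexp | Seq com com | If aexp com com | While aexp com

inductive big_step :: "com \<Rightarrow> (nat \<Rightarrow> nat) \<Rightarrow> nat \<Rightarrow> (nat \<Rightarrow> nat) \<Rightarrow> bool" where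
  Skip: "big_step SKIP m 1 m"
| Assign: "big_step (Assign a e) m 1 (m(aval a m := aval e m))"
| Seq: "big_step c1 m k1 m1 \<Longrightarrow> big_step c2 m1 k2 m2 \<Longrightarrow> big_step (Seq c1 c2) m (k1 + k2) m2"
| IfT: "aval b m \<noteq> 0 \<Longrightarrow> big_step c1 m k m' \<Longrightarrow> big_step (If b c1 c2) m (Suc k) m'"
| IfF: "aval b m = 0 \<Longrightarrow> big_step c2 m k m' \<Longrightarrow> big_step (If b c1 c2) m (Suc k) m'"
| WhileF: "aval b m = 0 \<Longrightarrow> big_step (While b c) m 1 m"
| WhileT: "aval b m \<noteq> 0 \<Longrightarrow> big_step c m k1 m1 \<Longrightarrow> big_step (While b c) m1 k2 m2 \<Longrightarrow>
     big_step (While b c) m (Suc (k1 + k2)) m2"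

definition enc_in :: "nat list \<Rightarrow> nat list \<Rightarrow> nat \<Rightarrow> nat" where
  "enc_in a t = (\<lambda>j. if j = 0 then length a
                     else if j \<le> length a then a ! (j - 1)
                     else if j \<le> 2 * length a then t ! (j - 1 - length a)
                     else 0)"

definition out_D :: "(nat \<Rightarrow> nat) \<Rightarrow> nat list" where
  "out_D m = map (\<lambda>i. m (Suc i)) [0..<m 0]"

definition out_T :: "(nat \<Rightarrow> nat) \<Rightarrow> nat list" where
  "out_T m = map (\<lambda>i. m (Suc (m 0 + i))) [0..<m 0]"

fun bitlen :: "nat \<Rightarrow> nat" where
  "bitlen n = (if n = 0 then 0 else Suc (bitlen (n div 2)))"

definition in3dm_size :: "nat list \<Rightarrow> nat list \<Rightarrow> nat" where
  "in3dm_size a t = length a + sum_list (map bitlen a) + sum_list (map bitlen t)"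

end

(* Sort the 2n entries of a and t, truncate every gap between consecutive values at K = n + 1
   and scale by K. This preserves each comparison t_j <= a_i + b with b <= n and makes all values
   polynomial in n. The compressed a_i are the entries of D that matter, the positions 1 + K b of
   the discretized sequence play the role of b, and the compressed t_j (shifted by -j to make them
   distinct) are targets. All other entries of the discretized sequence 2, 3, ... are absorbed:
   each filler f is matched with the entry f and the target 2f, and a block of equal large values
   V is matched with the top of the discretized sequence and the largest targets. A while-program
   computes this instance in O(n^3) steps. *)

theory Submission
  imports Defs
begin

definition matching ::
    "('a \<Rightarrow> 'b \<Rightarrow> 'c \<Rightarrow> bool) \<Rightarrow> 'a multiset \<Rightarrow> 'b multiset \<Rightarrow> 'c multiset \<Rightarrow> bool" where
  "matching R A B C \<longleftrightarrow> (\<exists>M. image_mset fst M = A \<and> image_mset (fst \<circ> snd) M = B \<and>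
      image_mset (snd \<circ> snd) M = C \<and> (\<forall>(x, y, z) \<in># M. R x y z))"

lemma in3dm_iff_matching:
  "in3dm a t \<longleftrightarrow> matching (\<lambda>x y z. z \<le> x + y) (mset a) (mset [1..<Suc (length a)]) (mset t)"
  unfolding in3dm_def matching_def ..

definition pm_rel :: "int \<Rightarrow> int \<Rightarrow> int \<Rightarrow> bool" where
  "pm_rel d x y \<longleftrightarrow> x \<le> d \<and> y \<le> d + x"

lemma pos_match_iff_matching:
  "pos_match D T \<longleftrightarrow>
     matching pm_rel (mset (map int D)) (mset (discretize (map int D))) (mset (map int T))"
  unfolding pos_match_def matching_def pm_rel_def ..

lemma matching_cong:
  assumes "\<And>x y z. x \<in># A \<Longrightarrow> y \<in># B \<Longrightarrow> z \<in># C \<Longrightarrow> R x y z \<longleftrightarrow> R' x y z"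
  shows "matching R A B C \<longleftrightarrow> matching R' A B C"
proof -
  have "(\<forall>(x, y, z) \<in># M. R x y z) \<longleftrightarrow> (\<forall>(x, y, z) \<in># M. R' x y z)"
    if "image_mset fst M = A" "image_mset (fst \<circ> snd) M = B" "image_mset (snd \<circ> snd) M = C" for M
    using assms that by force
  then show ?thesis
    unfolding matching_def by blast
qed

lemma image_mset_eq_coupling:
  assumes "image_mset f X = image_mset g Y"
  obtains P where "image_mset fst P = X" "image_mset snd P = Y" "\<forall>(x, y) \<in># P. f x = g y"
proof -
  have "rel_mset (=) (image_mset f X) (image_mset g Y)"
    using assms by (simp add: multiset.rel_eq)
  then have "rel_mset (\<lambda>x y. f x = g y) X Y"
    by (simp add: multiset.rel_map)
  then show ?thesis
    using that unfolding multiset.in_rel by auto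
qed

lemma matching_image_mset_pullback:
  assumes "matching R (image_mset f A) (image_mset g B) (image_mset h C)"
  shows "matching (\<lambda>x y z. R (f x) (g y) (h z)) A B C"
proof -
  obtain M where M: "image_mset fst M = image_mset f A" "image_mset (fst \<circ> snd) M = image_mset g B"
    "image_mset (snd \<circ> snd) M = image_mset h C" "\<forall>(x, y, z) \<in># M. R x y z"
    using assms unfolding matching_def by blast
  obtain P1 where P1: "image_mset fst P1 = M" "image_mset snd P1 = A" "\<forall>(p, x) \<in># P1. fst p = f x"
    using image_mset_eq_coupling[OF M(1)] .
  have "image_mset (fst \<circ> snd \<circ> fst) P1 = image_mset g B"
    using M(2) P1(1) by (simp flip: image_mset.compositionality)
  then obtain P2 where P2: "image_mset fst P2 = P1" "image_mset snd P2 = B"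
    "\<forall>(q, y) \<in># P2. fst (snd (fst q)) = g y"
    by (rule image_mset_eq_coupling) auto
  have "image_mset (snd \<circ> snd \<circ> fst \<circ> fst) P2 = image_mset h C"
    using M(3) P1(1) P2(1) by (simp flip: image_mset.compositionality)
  then obtain P3 where P3: "image_mset fst P3 = P2" "image_mset snd P3 = C"
    "\<forall>(q, z) \<in># P3. snd (snd (fst (fst q))) = h z"
    by (rule image_mset_eq_coupling) auto
  define M' where "M' = image_mset (\<lambda>(((p, x), y), z). (x, y, z)) P3"
  have "A = image_mset snd (image_mset fst (image_mset fst P3))"
    "B = image_mset snd (image_mset fst P3)" "C = image_mset snd P3"
    using P1(2) P2(1,2) P3(1,2) by simp_all
  then have "image_mset fst M' = A" "image_mset (fst \<circ> snd) M' = B" "image_mset (snd \<circ> snd) M' = C"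
    unfolding M'_def by (simp_all add: image_mset.compositionality comp_def case_prod_beta')
  moreover have "\<forall>(x, y, z) \<in># M'. R (f x) (g y) (h z)"
  proof (clarsimp simp: M'_def)
    fix p x y z assume in3: "(((p, x), y), z) \<in># P3"
    then have in2: "((p, x), y) \<in># P2" and in1: "(p, x) \<in># P1"
      using P3(1) P2(1) by (metis fst_conv image_eqI set_image_mset)+
    then have "p \<in># M"
      using P1(1) by (metis fst_conv image_eqI set_image_mset)
    then show "R (f x) (g y) (h z)"
      using M(4) P1(3) P2(3) P3(3) in1 in2 in3 by fastforce
  qed
  ultimately show ?thesis
    unfolding matching_def by blast
qed

lemma matching_image_mset_iff:
  "matching R (image_mset f A) (image_mset g B) (image_mset h C) \<longleftrightarrow>
   matching (\<lambda>x y z. R (f x) (g y) (h z)) A B C"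
proof
  assume "matching (\<lambda>x y z. R (f x) (g y) (h z)) A B C"
  then obtain M where M: "image_mset fst M = A" "image_mset (fst \<circ> snd) M = B"
    "image_mset (snd \<circ> snd) M = C" "\<forall>(x, y, z) \<in># M. R (f x) (g y) (h z)"
    unfolding matching_def by blast
  show "matching R (image_mset f A) (image_mset g B) (image_mset h C)"
    unfolding matching_def
    by (rule exI[of _ "image_mset (map_prod f (map_prod g h)) M"])
      (use M in \<open>auto simp: image_mset.compositionality comp_def simp flip: M(1-3)\<close>)
qed (rule matching_image_mset_pullback)

lemma subset_mset_size_eq:
  assumes "A \<subseteq># B" "size B \<le> size A"
  shows "A = B"
  using assms by (metis mset_subset_size subset_mset.le_less leD)

lemma image_mset_filter_mset_forced:
  assumes "\<forall>p \<in># M. Q (g p) \<longrightarrow> P (f p)"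
    and "size (filter_mset P (image_mset f M)) \<le> size (filter_mset Q (image_mset g M))"
  shows "image_mset f (filter_mset (\<lambda>p. Q (g p)) M) = filter_mset P (image_mset f M)"
proof (rule subset_mset_size_eq)
  have "\<forall>x \<in># image_mset f (filter_mset (\<lambda>p. Q (g p)) M). P x"
    using assms(1) by auto
  then have "image_mset f (filter_mset (\<lambda>p. Q (g p)) M) =
        filter_mset P (image_mset f (filter_mset (\<lambda>p. Q (g p)) M))"
    by (metis filter_mset_True filter_mset_cong)
  also have "\<dots> \<subseteq># filter_mset P (image_mset f M)"
    by (intro multiset_filter_mono image_mset_subseteq_mono) simp
  finally show "image_mset f (filter_mset (\<lambda>p. Q (g p)) M) \<subseteq># filter_mset P (image_mset f M)" .
  show "size (filter_mset P (image_mset f M)) \<le> size (image_mset f (filter_mset (\<lambda>p. Q (g p)) M))"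
    using assms(2) by (simp flip: image_mset_filter_mset_swap)
qed

lemma sum_mset_eq_imp_pointwise_eq:
  fixes f g :: "'a \<Rightarrow> 'b::ordered_cancel_comm_monoid_add"
  assumes "\<forall>p \<in># M. f p \<le> g p" "(\<Sum>p\<in>#M. f p) = (\<Sum>p\<in>#M. g p)"
  shows "\<forall>p \<in># M. f p = g p"
  using assms
proof (induction M)
  case (add p M)
  have le: "f p \<le> g p" "(\<Sum>q\<in>#M. f q) \<le> (\<Sum>q\<in>#M. g q)"
    using add.prems(1) by (simp, intro sum_mset_mono) simp
  have eq: "f p + (\<Sum>q\<in>#M. f q) = g p + (\<Sum>q\<in>#M. g q)"
    using add.prems(2) by simp
  have "f p = g p"
  proof (rule ccontr)
    assume "f p \<noteq> g p"
    with le have "f p + (\<Sum>q\<in>#M. f q) < g p + (\<Sum>q\<in>#M. g q)"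
      by (intro add_less_le_mono) simp_all
    with eq show False
      by simp
  qed
  with eq have "(\<Sum>q\<in>#M. f q) = (\<Sum>q\<in>#M. g q)"
    by simp
  then have "\<forall>q \<in># M. f q = g q"
    using add.prems(1) add.IH by (metis add_mset_remove_trivial in_diffD)
  with \<open>f p = g p\<close> show ?case
    by simp
qed simp

lemma matching_add:
  assumes "matching R A B C" "matching R A' B' C'"
  shows "matching R (A + A') (B + B') (C + C')"
proof -
  obtain M M' where "image_mset fst M = A" "image_mset (fst \<circ> snd) M = B" "image_mset (snd \<circ> snd) M = C"
    "\<forall>(x, y, z) \<in># M. R x y z" "image_mset fst M' = A'" "image_mset (fst \<circ> snd) M' = B'"
    "image_mset (snd \<circ> snd) M' = C'" "\<forall>(x, y, z) \<in># M'. R x y z"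
    using assms unfolding matching_def by blast
  then show ?thesis
    unfolding matching_def by (intro exI[of _ "M + M'"]) auto
qed

lemma matching_image_mset_diag:
  assumes "\<forall>x \<in># X. R (f x) (g x) (h x)"
  shows "matching R (image_mset f X) (image_mset g X) (image_mset h X)"
  unfolding matching_def
  by (rule exI[of _ "image_mset (\<lambda>x. (f x, g x, h x)) X"])
    (use assms in \<open>auto simp: image_mset.compositionality comp_def\<close>)

lemma image_mset_filter_mset_not:
  "image_mset f (filter_mset (\<lambda>p. \<not> P p) M) = image_mset f M - image_mset f (filter_mset P M)"
proof -
  have "image_mset f M = image_mset f (filter_mset P M) + image_mset f (filter_mset (\<lambda>p. \<not> P p) M)"
    by (simp flip: image_mset_union multiset_partition)
  then show ?thesis
    by simp
qed

lemma matching_filter_mset_complement: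
  assumes "image_mset fst M = A + A'" "image_mset (fst \<circ> snd) M = B + B'"
    "image_mset (snd \<circ> snd) M = C + C'" "\<forall>(x, y, z) \<in># M. R x y z"
    and "image_mset fst (filter_mset P M) = A'" "image_mset (fst \<circ> snd) (filter_mset P M) = B'"
    "image_mset (snd \<circ> snd) (filter_mset P M) = C'"
  shows "matching R A B C"
  unfolding matching_def
  by (rule exI[of _ "filter_mset (\<lambda>p. \<not> P p) M"]) (use assms in \<open>auto simp: image_mset_filter_mset_not\<close>)

lemma filter_mset_add_eq_right:
  assumes "\<forall>x \<in># X. \<not> P x" "\<forall>y \<in># Y. P y"
  shows "filter_mset P (X + Y) = Y"
proof -
  have "filter_mset P X = {#}"
    using assms(1) by (auto simp: filter_mset_eq_mempty_iff)
  moreover have "filter_mset P Y = Y"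
    using assms(2) by (metis filter_mset_True filter_mset_cong)
  ultimately show ?thesis
    by simp
qed

text \<open>In a position matching, the \<open>L\<close> padding targets above \<open>2V - L\<close> can only be reached by
  the \<open>L\<close> copies of \<open>V\<close> together with the \<open>L\<close> largest middle entries, so the padding is
  matched with itself.\<close>

lemma matching_pm_rel_padding_iff:
  fixes V :: int and L :: nat
  defines "top_x \<equiv> map (\<lambda>q. V - int L + 1 + int q) [0..<L]"
    and "top_z \<equiv> map (\<lambda>q. 2 * V - int L + 1 + int q) [0..<L]"
  assumes A: "\<forall>d \<in># A. 2 * d \<le> 2 * V - int L"
    and B: "\<forall>x \<in># B. x \<le> V - int L"
    and C: "\<forall>z \<in># C. z \<le> 2 * V - int L"
  shows "matching pm_rel (A + replicate_mset L V) (B + mset top_x) (C + mset top_z) \<longleftrightarrow>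
         matching pm_rel A B C"
proof
  assume "matching pm_rel (A + replicate_mset L V) (B + mset top_x) (C + mset top_z)"
  then obtain M where M: "image_mset fst M = A + replicate_mset L V"
    "image_mset (fst \<circ> snd) M = B + mset top_x" "image_mset (snd \<circ> snd) M = C + mset top_z"
    and rel: "\<forall>(d, x, z) \<in># M. pm_rel d x z"
    unfolding matching_def by blast
  let ?big = "\<lambda>z. 2 * V - int L < z"
  let ?Mb = "filter_mset (\<lambda>p. ?big (snd (snd p))) M"
  have z_M: "image_mset (\<lambda>p. snd (snd p)) M = C + mset top_z"
    using M(3) by (simp add: comp_def)
  have filter_z: "filter_mset ?big (C + mset top_z) = mset top_z"
    using C by (intro filter_mset_add_eq_right) (auto simp: top_z_def)
  have filter_d: "filter_mset (\<lambda>d. 2 * V - int L < 2 * d) (A + replicate_mset L V) = replicate_mset L V"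
    using A by (intro filter_mset_add_eq_right) (auto simp: in_replicate_mset)
  have filter_x: "filter_mset (\<lambda>x. V - int L < x) (B + mset top_x) = mset top_x"
    using B by (intro filter_mset_add_eq_right) (auto simp: top_x_def)
  have forced: "2 * V - int L < 2 * fst p \<and> V - int L < fst (snd p)"
    if "p \<in># M" "?big (snd (snd p))" for p
  proof -
    have "fst p \<in># A + replicate_mset L V"
      using that(1) M(1) by (metis image_eqI set_image_mset)
    moreover have "pm_rel (fst p) (fst (snd p)) (snd (snd p))"
      using that(1) rel by auto
    ultimately show ?thesis
      using that(2) A unfolding pm_rel_def by (auto split: if_splits)
  qed
  have "image_mset fst ?Mb = filter_mset (\<lambda>d. 2 * V - int L < 2 * d) (image_mset fst M)"
    by (rule image_mset_filter_mset_forced[where g = "\<lambda>p. snd (snd p)" and Q = ?big])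
      (use forced in blast, unfold M(1) z_M filter_d filter_z, simp add: top_z_def)
  then have fst_Mb: "image_mset fst ?Mb = replicate_mset L V"
    by (simp only: M(1) filter_d)
  have "image_mset (fst \<circ> snd) ?Mb = filter_mset (\<lambda>x. V - int L < x) (image_mset (fst \<circ> snd) M)"
    by (rule image_mset_filter_mset_forced[where g = "\<lambda>p. snd (snd p)" and Q = ?big])
      (use forced in auto, unfold M(2) z_M filter_x filter_z, simp add: top_x_def top_z_def)
  then have snd_Mb: "image_mset (fst \<circ> snd) ?Mb = mset top_x"
    by (simp only: M(2) filter_x)
  have "image_mset (snd \<circ> snd) ?Mb = filter_mset ?big (image_mset (\<lambda>p. snd (snd p)) M)"
    unfolding comp_def by (rule image_mset_filter_mset_swap)
  then have thd_Mb: "image_mset (snd \<circ> snd) ?Mb = mset top_z"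
    by (simp only: z_M filter_z)
  show "matching pm_rel A B C"
    by (rule matching_filter_mset_complement[OF M rel fst_Mb snd_Mb thd_Mb])
next
  assume "matching pm_rel A B C"
  moreover have "matching pm_rel (replicate_mset L V) (mset top_x) (mset top_z)"
    using matching_image_mset_diag[of "mset [0..<L]" pm_rel "\<lambda>_. V" "\<lambda>q. V - int L + 1 + int q"
        "\<lambda>q. 2 * V - int L + 1 + int q"]
    by (simp add: top_x_def top_z_def pm_rel_def image_mset_const_eq)
  ultimately show "matching pm_rel (A + replicate_mset L V) (B + mset top_x) (C + mset top_z)"
    by (rule matching_add)
qed

text \<open>A filler \<open>f \<le> b\<close> can only reach a target at most \<open>2f\<close>; since these targets are exactly the
  \<open>2f\<close>, summing shows that each filler is matched with the middle entry \<open>f\<close> and the target \<open>2f\<close>.\<close>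

lemma matching_pm_rel_fillers_iff:
  fixes F A B C :: "int multiset" and b :: int
  assumes F: "\<forall>f \<in># F. f \<le> b" and A: "\<forall>d \<in># A. b < d" and C: "\<forall>z \<in># C. 2 * b < z"
  shows "matching pm_rel (F + A) (F + B) (image_mset (\<lambda>f. 2 * f) F + C) \<longleftrightarrow>
         matching pm_rel A B C"
proof
  assume "matching pm_rel (F + A) (F + B) (image_mset (\<lambda>f. 2 * f) F + C)"
  then obtain M where M: "image_mset fst M = F + A" "image_mset (fst \<circ> snd) M = F + B"
    "image_mset (snd \<circ> snd) M = image_mset (\<lambda>f. 2 * f) F + C"
    and rel: "\<forall>(d, x, z) \<in># M. pm_rel d x z"
    unfolding matching_def by blast
  let ?Mf = "filter_mset (\<lambda>p. fst p \<le> b) M"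
  have z_M: "image_mset (\<lambda>p. snd (snd p)) M = image_mset (\<lambda>f. 2 * f) F + C"
    using M(3) by (simp add: comp_def)
  have filter_d: "filter_mset (\<lambda>d. d \<le> b) (A + F) = F"
    using A F by (intro filter_mset_add_eq_right) auto
  have filter_z: "filter_mset (\<lambda>z. z \<le> 2 * b) (C + image_mset (\<lambda>f. 2 * f) F) = image_mset (\<lambda>f. 2 * f) F"
    using C F by (intro filter_mset_add_eq_right) auto
  have fst_Mf: "image_mset fst ?Mf = F"
    using filter_d unfolding image_mset_filter_mset_swap[of fst "\<lambda>d. d \<le> b"] M(1) by (simp add: add.commute)
  have rel': "fst (snd p) \<le> fst p" "snd (snd p) \<le> fst p + fst (snd p)" if "p \<in># M" for p
    using that rel unfolding pm_rel_def by auto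
  have "image_mset (\<lambda>p. snd (snd p)) ?Mf = filter_mset (\<lambda>z. z \<le> 2 * b) (image_mset (\<lambda>p. snd (snd p)) M)"
    by (rule image_mset_filter_mset_forced[where g = fst and Q = "\<lambda>d. d \<le> b"])
      (use rel' in fastforce, use filter_d filter_z in \<open>simp add: z_M M(1) add.commute\<close>)
  then have thd_Mf: "image_mset (\<lambda>p. snd (snd p)) ?Mf = image_mset (\<lambda>f. 2 * f) F"
    using filter_z by (simp add: z_M add.commute)
  have "\<forall>p \<in># ?Mf. snd (snd p) = 2 * fst p"
  proof (rule sum_mset_eq_imp_pointwise_eq)
    show "\<forall>p \<in># ?Mf. snd (snd p) \<le> 2 * fst p"
      using rel' by force
    have "image_mset (\<lambda>p. 2 * fst p) ?Mf = image_mset (\<lambda>f. 2 * f) (image_mset fst ?Mf)"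
      by (simp add: image_mset.compositionality comp_def)
    then show "(\<Sum>p\<in>#?Mf. snd (snd p)) = (\<Sum>p\<in>#?Mf. 2 * fst p)"
      unfolding thd_Mf fst_Mf by simp
  qed
  then have "image_mset (fst \<circ> snd) ?Mf = image_mset fst ?Mf"
    using rel' by (intro image_mset_cong) fastforce
  then show "matching pm_rel A B C"
    using M rel fst_Mf thd_Mf
    by (intro matching_filter_mset_complement[where P = "\<lambda>p. fst p \<le> b"]) (simp_all add: add.commute comp_def)
next
  have "matching pm_rel F F (image_mset (\<lambda>f. 2 * f) F)"
    using matching_image_mset_diag[of F pm_rel id id "\<lambda>f. 2 * f"] by (simp add: pm_rel_def)
  moreover assume "matching pm_rel A B C"
  ultimately show "matching pm_rel (F + A) (F + B) (image_mset (\<lambda>f. 2 * f) F + C)"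
    by (rule matching_add)
qed

definition compress :: "nat \<Rightarrow> (nat \<Rightarrow> nat) \<Rightarrow> nat \<Rightarrow> nat" where
  "compress K s r = (\<Sum>i<r. K * min (s (Suc i) - s i) K)"

lemma compress_Suc: "compress K s (Suc r) = compress K s r + K * min (s (Suc r) - s r) K"
  unfolding compress_def by simp

lemma compress_split:
  assumes "r1 \<le> r2"
  shows "compress K s r2 = compress K s r1 + K * (\<Sum>i = r1..<r2. min (s (Suc i) - s i) K)"
  unfolding compress_def sum_distrib_left lessThan_atLeast0
  using sum.atLeastLessThan_concat[OF le0 assms, of "\<lambda>i. K * min (s (Suc i) - s i) K"] by simp

lemma compress_mono: "r1 \<le> r2 \<Longrightarrow> compress K s r1 \<le> compress K s r2"
  using compress_split by (metis le_add1)

lemma compress_le: "compress K s r \<le> r * K * K"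
proof -
  have "compress K s r \<le> (\<Sum>i<r. K * K)"
    unfolding compress_def by (intro sum_mono) simp
  then show ?thesis
    by simp
qed

lemma telescope_mono:
  fixes s :: "nat \<Rightarrow> nat"
  assumes "\<And>i. r1 \<le> i \<Longrightarrow> i < r2 \<Longrightarrow> s i \<le> s (Suc i)" "r1 \<le> r2"
  shows "s r2 = s r1 + (\<Sum>i = r1..<r2. s (Suc i) - s i)"
  using assms(2,1)
proof (induction r2 rule: dec_induct)
  case (step r)
  have "s r \<le> s (Suc r)"
    using step.hyps step.prems by simp
  moreover have "s r = s r1 + (\<Sum>i = r1..<r. s (Suc i) - s i)"
    using step.IH step.prems by simp
  ultimately show ?case
    using step.hyps(1) by simp
qed simp

text \<open>Gaps of size at least \<open>K\<close> are irrelevant for comparisons \<open>s r2 \<le> s r1 + b\<close> with \<open>b < K\<close>, so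
  they can be truncated. This keeps all values polynomial in \<open>n\<close>, which matters because the
  reduction pads its output with a number of elements linear in the largest value.\<close>

lemma compress_le_iff:
  assumes mono: "\<And>i. Suc i < m \<Longrightarrow> s i \<le> s (Suc i)" and "r1 < m" "r2 < m" "b < K"
  shows "s r2 \<le> s r1 + b \<longleftrightarrow> compress K s r2 \<le> compress K s r1 + K * b"
proof (cases "r2 \<le> r1")
  case True
  have "s r2 \<le> s r1"
    using telescope_mono[OF _ True, of s] mono \<open>r1 < m\<close> by simp
  then show ?thesis
    using compress_mono[OF True] by (simp add: trans_le_add1)
next
  case False
  let ?S = "\<Sum>i = r1..<r2. s (Suc i) - s i"
  let ?T = "\<Sum>i = r1..<r2. min (s (Suc i) - s i) K"
  have s: "s r2 = s r1 + ?S"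
    using False mono \<open>r2 < m\<close> by (intro telescope_mono) auto
  have c: "compress K s r2 = compress K s r1 + K * ?T"
    using False by (intro compress_split) simp
  have "?S \<le> b \<longleftrightarrow> ?T \<le> b"
  proof
    assume "?T \<le> b"
    then have "min (s (Suc i) - s i) K = s (Suc i) - s i" if "i \<in> {r1..<r2}" for i
      using member_le_sum[OF that, of "\<lambda>i. min (s (Suc i) - s i) K"] \<open>b < K\<close> by simp
    with \<open>?T \<le> b\<close> show "?S \<le> b"
      by simp
  qed (meson order_trans sum_mono min.cobounded1)
  moreover have "0 < K"
    using \<open>b < K\<close> by simp
  ultimately show ?thesis
    using s c by simp
qed

lemma discretize_Cons:
  "discretize (d # ds) = (case discretize ds of [] \<Rightarrow> [d] | x # _ \<Rightarrow> min (x - 1) d # discretize ds)"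
  unfolding discretize_def by simp

lemma discretize_eq_run:
  assumes "ds \<noteq> []" "last ds = v" "\<forall>j < length ds. v - int (length ds) + 1 + int j \<le> ds ! j"
  shows "discretize ds = map (\<lambda>j. v - int (length ds) + 1 + int j) [0..<length ds]"
  using assms
proof (induction ds)
  case (Cons d ds)
  show ?case
  proof (cases "ds = []")
    case True
    then show ?thesis
      using Cons.prems(2) by (simp add: discretize_def)
  next
    case False
    have IH: "discretize ds = map (\<lambda>j. v - int (length ds) + 1 + int j) [0..<length ds]"
    proof (rule Cons.IH[OF False])
      show "last ds = v"
        using Cons.prems(2) False by simp
      show "\<forall>j < length ds. v - int (length ds) + 1 + int j \<le> ds ! j"
        using Cons.prems(3) by (auto dest: spec[of _ "Suc j" for j])
    qed
    have "v - int (length ds) \<le> d"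
      using Cons.prems(3) by (auto dest: spec[of _ 0])
    then have "discretize (d # ds) = (v - int (length ds)) # discretize ds"
      using False by (simp add: discretize_Cons IH upt_conv_Cons)
    then show ?thesis
      by (simp add: IH upt_conv_Cons map_Suc_upt[symmetric] del: upt_Suc)
  qed
qed simp

lemma mult_le_mult_add_iff:
  fixes K c1 c2 j :: nat
  assumes "j < K"
  shows "K * c1 \<le> K * c2 + j \<longleftrightarrow> c1 \<le> c2"
proof
  assume "K * c1 \<le> K * c2 + j"
  then have "K * c1 < K * Suc c2"
    using assms by simp
  then show "c1 \<le> c2"
    by (simp only: mult_less_cancel1 less_Suc_eq_le)
qed (simp add: trans_le_add1)

lemma mset_filter_multiples_upt:
  assumes "0 < K"
  shows "mset (filter (\<lambda>c. c mod K = 0) [1..<Suc (m * K)]) = mset (map (\<lambda>b. K * Suc b) [0..<m])"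
proof -
  have "set (filter (\<lambda>c. c mod K = 0) [1..<Suc (m * K)]) = set (map (\<lambda>b. K * Suc b) [0..<m])"
  proof (intro set_eqI iffI)
    fix c assume "c \<in> set (filter (\<lambda>c. c mod K = 0) [1..<Suc (m * K)])"
    then obtain q where "c = K * q" "1 \<le> K * q" "K * q \<le> K * m"
      by (auto simp: mult.commute elim!: dvdE[OF mod_0_imp_dvd])
    then have "c = K * Suc (q - 1)" "q - 1 < m"
      using assms by (auto simp: Suc_le_eq)
    then show "c \<in> set (map (\<lambda>b. K * Suc b) [0..<m])"
      by auto
  next
    fix c assume "c \<in> set (map (\<lambda>b. K * Suc b) [0..<m])"
    then obtain b where "c = K * Suc b" "b \<in> set [0..<m]"
      unfolding set_map by (rule imageE)
    moreover have "K * Suc b \<le> K * m"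
      using \<open>b \<in> set [0..<m]\<close> by (intro mult_le_mono2) simp
    ultimately show "c \<in> set (filter (\<lambda>c. c mod K = 0) [1..<Suc (m * K)])"
      using assms by (auto simp: mult.commute)
  qed
  moreover have "distinct (map (\<lambda>b. K * Suc b) [0..<m])"
    using assms by (simp add: distinct_map inj_on_def)
  moreover have "distinct (filter (\<lambda>c. c mod K = 0) [1..<Suc (m * K)])"
    by simp
  ultimately show ?thesis
    using set_eq_iff_mset_eq_distinct by blast
qed

locale in3dm_instance =
  fixes a t :: "nat list"
  assumes length_t: "length t = length a"
begin

abbreviation n where "n \<equiv> length a"

definition w where "w = a @ t"

definition precedes :: "nat \<Rightarrow> nat \<Rightarrow> bool" where
  "precedes l k \<longleftrightarrow> w ! l < w ! k \<or> (w ! l = w ! k \<and> l < k)"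

definition rank :: "nat \<Rightarrow> nat" where
  "rank k = length (filter (\<lambda>l. precedes l k) [0..<2 * n])"

lemma rank_eq_card: "rank k = card {l. l < 2 * n \<and> precedes l k}"
proof -
  have "rank k = card (set (filter (\<lambda>l. precedes l k) [0..<2 * n]))"
    unfolding rank_def by (simp add: distinct_card del: set_filter)
  also have "set (filter (\<lambda>l. precedes l k) [0..<2 * n]) = {l. l < 2 * n \<and> precedes l k}"
    by auto
  finally show ?thesis .
qed

lemma rank_less: "k < 2 * n \<Longrightarrow> rank k < 2 * n"
proof -
  assume "k < 2 * n"
  then have "card {l. l < 2 * n \<and> precedes l k} \<le> card ({..<2 * n} - {k})"
    by (intro card_mono) (auto simp: precedes_def)
  with \<open>k < 2 * n\<close> show ?thesis
    by (simp add: rank_eq_card)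
qed

lemma rank_strict_mono:
  assumes "precedes k1 k2" "k1 < 2 * n"
  shows "rank k1 < rank k2"
proof -
  have "{l. l < 2 * n \<and> precedes l k1} \<subset> {l. l < 2 * n \<and> precedes l k2}"
    using assms unfolding precedes_def by auto
  then show ?thesis
    unfolding rank_eq_card by (intro psubset_card_mono) auto
qed

lemma bij_betw_rank: "bij_betw rank {..<2 * n} {..<2 * n}"
proof -
  have "inj_on rank {..<2 * n}"
  proof (rule inj_onI)
    fix k1 k2 assume "k1 \<in> {..<2 * n}" "k2 \<in> {..<2 * n}" "rank k1 = rank k2"
    then show "k1 = k2"
      using rank_strict_mono[of k1 k2] rank_strict_mono[of k2 k1]
      by (auto simp: precedes_def) (metis linorder_neqE_nat nat_neq_iff)
  qed
  moreover have "rank ` {..<2 * n} \<subseteq> {..<2 * n}"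
    using rank_less by auto
  ultimately show ?thesis
    by (simp add: bij_betw_def card_image card_subset_eq)
qed

definition unrank :: "nat \<Rightarrow> nat" where
  "unrank r = inv_into {..<2 * n} rank r"

lemma unrank_less: "r < 2 * n \<Longrightarrow> unrank r < 2 * n"
  unfolding unrank_def using bij_betw_rank by (meson bij_betwE bij_betw_inv_into lessThan_iff)

lemma rank_unrank: "r < 2 * n \<Longrightarrow> rank (unrank r) = r"
  unfolding unrank_def using bij_betw_rank by (simp add: bij_betw_inv_into_right)

lemma unrank_rank: "k < 2 * n \<Longrightarrow> unrank (rank k) = k"
  unfolding unrank_def using bij_betw_rank by (simp add: bij_betw_inv_into_left)

definition wsort :: "nat \<Rightarrow> nat" where
  "wsort r = w ! unrank r"

lemma wsort_rank: "k < 2 * n \<Longrightarrow> wsort (rank k) = w ! k"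
  by (simp add: wsort_def unrank_rank)

lemma wsort_mono: "Suc r < 2 * n \<Longrightarrow> wsort r \<le> wsort (Suc r)"
proof (rule ccontr)
  assume "Suc r < 2 * n" "\<not> wsort r \<le> wsort (Suc r)"
  then have "rank (unrank (Suc r)) < rank (unrank r)"
    by (intro rank_strict_mono unrank_less) (auto simp: wsort_def precedes_def)
  with \<open>Suc r < 2 * n\<close> show False
    by (simp add: rank_unrank)
qed

definition K where "K = Suc n"

definition cw :: "nat \<Rightarrow> nat" where
  "cw = compress K wsort"

lemma cw_le_iff:
  assumes "k1 < 2 * n" "k2 < 2 * n" "b < K"
  shows "w ! k2 \<le> w ! k1 + b \<longleftrightarrow> cw (rank k2) \<le> cw (rank k1) + K * b"
  using compress_le_iff[of "2 * n" wsort "rank k1" "rank k2" b K] assms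
  by (simp add: cw_def wsort_mono rank_less wsort_rank)

lemma K_dvd_cw: "K dvd cw r"
  unfolding cw_def compress_def by (simp add: dvd_sum)

definition cmax where "cmax = cw (2 * n - 1)"

lemma cw_le_cmax: "r < 2 * n \<Longrightarrow> cw r \<le> cmax"
  unfolding cmax_def cw_def by (intro compress_mono) simp

definition nsmall where "nsmall = n * K"
definition npad where "npad = 2 * (nsmall + n + cmax + 1)"
definition vpad where "vpad = npad + nsmall + 1"
definition nout where "nout = nsmall + npad"
definition cbase where "cbase = 1 + 2 * nsmall + n"

definition fillers :: "nat list" where
  "fillers = filter (\<lambda>c. c mod K \<noteq> 0) [1..<Suc nsmall]"

definition coreA :: "nat \<Rightarrow> nat" where "coreA i = cbase + cw (rank i)"
definition coreX :: "nat \<Rightarrow> nat" where "coreX b = 1 + K * Suc b"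
definition coreT :: "nat \<Rightarrow> nat" where "coreT j = cbase + 1 + cw (rank (n + j)) - j"

text \<open>\<open>coreD\<close> lists the values \<open>coreA i\<close> in increasing order, as \<open>D\<close> must be sorted.\<close>

definition coreD :: "nat list" where
  "coreD = map (\<lambda>r. cbase + cw r) (filter (\<lambda>r. unrank r < n) [0..<2 * n])"

definition redD :: "nat list" where
  "redD = map Suc fillers @ coreD @ replicate npad vpad"

definition redT :: "nat list" where
  "redT = map coreT [0..<n] @ map (\<lambda>c. 2 + 2 * c) fillers @ map (\<lambda>q. 2 * vpad - npad + 1 + q) [0..<npad]"

text \<open>The \<open>-j\<close> in \<open>coreT\<close> makes the targets distinct without affecting any comparison,
  since all other quantities are multiples of \<open>K > j\<close> (up to the common offset).\<close>

lemma core_rel_iff: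
  assumes "i < n" "j < n" "b < n"
  shows "t ! j \<le> a ! i + Suc b \<longleftrightarrow> pm_rel (int (coreA i)) (int (coreX b)) (int (coreT j))"
proof -
  obtain c1 c2 where c: "cw (rank (n + j)) = K * c1" "cw (rank i) = K * c2"
    using K_dvd_cw by (metis dvdE)
  have "j < K" "Suc b < K"
    using assms by (simp_all add: K_def)
  have "t ! j \<le> a ! i + Suc b \<longleftrightarrow> w ! (n + j) \<le> w ! i + Suc b"
    using assms length_t by (simp add: w_def nth_append)
  also have "\<dots> \<longleftrightarrow> K * c1 \<le> K * (c2 + Suc b)"
    using cw_le_iff[of i "n + j" "Suc b"] assms \<open>Suc b < K\<close> c by (simp add: distrib_left add_ac)
  also have "\<dots> \<longleftrightarrow> c1 \<le> c2 + Suc b"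
    unfolding K_def by (rule mult_le_cancel1[THEN trans]) simp
  also have "\<dots> \<longleftrightarrow> K * c1 \<le> K * (c2 + Suc b) + j"
    using \<open>j < K\<close> by (rule mult_le_mult_add_iff[symmetric])
  also have "\<dots> \<longleftrightarrow> coreT j \<le> coreA i + coreX b"
    using assms c by (simp add: coreA_def coreX_def coreT_def cbase_def distrib_left) linarith
  finally have "t ! j \<le> a ! i + Suc b \<longleftrightarrow> coreT j \<le> coreA i + coreX b" .
  moreover have "coreX b \<le> coreA i"
  proof -
    have "K * Suc b \<le> K * n"
      by (rule mult_le_mono2) (use assms in simp)
    then show ?thesis
      by (simp add: coreA_def coreX_def cbase_def nsmall_def mult.commute)
  qed
  ultimately show ?thesis
    unfolding pm_rel_def by linarith
qed

lemma in3dm_iff_core: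
  "in3dm a t \<longleftrightarrow> matching pm_rel (mset (map (int \<circ> coreA) [0..<n]))
     (mset (map (int \<circ> coreX) [0..<n])) (mset (map (int \<circ> coreT) [0..<n]))"
proof -
  let ?I = "mset [0..<n]"
  have "mset a = image_mset (nth a) ?I"
    by (metis map_nth mset_map)
  moreover have "mset t = image_mset (nth t) ?I"
    by (metis length_t map_nth mset_map)
  moreover have "mset [1..<Suc n] = image_mset Suc ?I"
  proof -
    have "[1..<Suc n] = map Suc [0..<n]"
      by (simp add: map_Suc_upt)
    then show ?thesis
      by (simp only: mset_map)
  qed
  ultimately
  have "in3dm a t \<longleftrightarrow>
      matching (\<lambda>x y z. z \<le> x + y) (image_mset (nth a) ?I) (image_mset Suc ?I) (image_mset (nth t) ?I)"
    by (simp add: in3dm_iff_matching)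
  also have "\<dots> \<longleftrightarrow> matching (\<lambda>i b j. t ! j \<le> a ! i + Suc b) ?I ?I ?I"
    by (simp add: matching_image_mset_iff)
  also have "\<dots> \<longleftrightarrow> matching (\<lambda>i b j. pm_rel (int (coreA i)) (int (coreX b)) (int (coreT j))) ?I ?I ?I"
    by (intro matching_cong) (simp only: set_mset_mset set_upt atLeastLessThan_iff core_rel_iff)
  also have "\<dots> \<longleftrightarrow> matching pm_rel (image_mset (int \<circ> coreA) ?I) (image_mset (int \<circ> coreX) ?I)
      (image_mset (int \<circ> coreT) ?I)"
    by (simp add: matching_image_mset_iff)
  finally show ?thesis
    by (simp only: mset_map)
qed

lemma fillers_bounds: "c \<in> set fillers \<Longrightarrow> 1 \<le> c \<and> c \<le> nsmall"
  by (auto simp: fillers_def)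

lemma sorted_fillers: "sorted_wrt (<) fillers"
  unfolding fillers_def by (intro sorted_wrt_filter sorted_wrt_upt)

lemma nth_fillers_ge: "j < length fillers \<Longrightarrow> Suc j \<le> fillers ! j"
proof -
  assume "j < length fillers"
  moreover have "sorted_wrt (<) (0 # fillers)"
    using sorted_fillers fillers_bounds by fastforce
  ultimately show ?thesis
    using sorted_wrt_less_idx[of "0 # fillers" "Suc j"] by simp
qed

lemma mset_multiples: "mset (filter (\<lambda>c. \<not> c mod K \<noteq> 0) [1..<Suc nsmall]) = mset (map (\<lambda>b. K * Suc b) [0..<n])"
  using mset_filter_multiples_upt[of K n] by (simp add: nsmall_def K_def)

lemma length_fillers: "length fillers = n * n"
proof -
  have "length fillers + length (filter (\<lambda>c. \<not> c mod K \<noteq> 0) [1..<Suc nsmall]) = nsmall"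
    unfolding fillers_def using sum_length_filter_compl[of "\<lambda>c. c mod K \<noteq> 0" "[1..<Suc nsmall]"]
    by (simp del: upt_Suc)
  moreover have "length (filter (\<lambda>c. \<not> c mod K \<noteq> 0) [1..<Suc nsmall]) = n"
    using arg_cong[OF mset_multiples, of size] by (simp only: size_mset length_map length_upt)
  ultimately show ?thesis
    by (simp add: nsmall_def K_def)
qed

lemma mset_coreD: "mset coreD = mset (map coreA [0..<n])"
proof -
  have "inj_on rank {0..<n}"
    using bij_betw_imp_inj_on[OF bij_betw_rank] by (rule inj_on_subset) auto
  then have "distinct (map rank [0..<n])"
    by (simp add: distinct_map)
  moreover have "set (filter (\<lambda>r. unrank r < n) [0..<2 * n]) = set (map rank [0..<n])"
  proof (intro set_eqI iffI)
    fix r assume "r \<in> set (filter (\<lambda>r. unrank r < n) [0..<2 * n])"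
    then have "r = rank (unrank r)" "unrank r \<in> {0..<n}"
      by (simp_all add: rank_unrank)
    then show "r \<in> set (map rank [0..<n])"
      by simp
  next
    fix r assume "r \<in> set (map rank [0..<n])"
    then show "r \<in> set (filter (\<lambda>r. unrank r < n) [0..<2 * n])"
      using rank_less unrank_rank by auto
  qed
  moreover have "distinct (filter (\<lambda>r. unrank r < n) [0..<2 * n])"
    by simp
  ultimately have "mset (filter (\<lambda>r. unrank r < n) [0..<2 * n]) = mset (map rank [0..<n])"
    using set_eq_iff_mset_eq_distinct by blast
  then have "image_mset (\<lambda>r. cbase + cw r) (mset (filter (\<lambda>r. unrank r < n) [0..<2 * n])) =
      image_mset (\<lambda>r. cbase + cw r) (mset (map rank [0..<n]))"
    by (rule arg_cong)
  then show ?thesis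
    unfolding coreD_def coreA_def mset_map image_mset.compositionality by (simp add: comp_def)
qed

lemma length_coreD: "length coreD = n"
  using arg_cong[OF mset_coreD, of size] by simp

lemma coreD_bounds: "d \<in> set coreD \<Longrightarrow> cbase \<le> d \<and> d \<le> cbase + cmax"
  unfolding coreD_def using cw_le_cmax by auto

lemma coreT_bounds: "j < n \<Longrightarrow> 2 + 2 * nsmall < coreT j \<and> coreT j \<le> cbase + 1 + cmax"
  using cw_le_cmax[of "rank (n + j)"] rank_less[of "n + j"] by (auto simp: coreT_def cbase_def)

lemma discretize_redD: "discretize (map int redD) = map (\<lambda>j. 2 + int j) [0..<nout]"
proof -
  have length_redD: "length redD = nout"
    by (simp add: redD_def length_fillers length_coreD nout_def nsmall_def K_def)
  have "Suc (Suc j) \<le> redD ! j" if "j < nout" for j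
  proof -
    consider "j < n * n" | "n * n \<le> j" "j < nsmall" | "nsmall \<le> j"
      by (fastforce simp: nsmall_def K_def)
    then show ?thesis
    proof cases
      case 1
      then show ?thesis
        using nth_fillers_ge[of j] by (simp add: redD_def nth_append length_fillers)
    next
      case 2
      then have "\<not> j < n * n" "j - n * n < n"
        by (simp_all add: nsmall_def K_def)
      then have "redD ! j \<in> set coreD"
        by (simp add: redD_def nth_append length_fillers length_coreD)
      then show ?thesis
        using coreD_bounds 2 by (fastforce simp: cbase_def)
    next
      case 3
      then have "\<not> j < n * n" "\<not> j - n * n < n"
        by (simp_all add: nsmall_def K_def)
      then have "redD ! j = vpad"
        using that by (simp add: redD_def nth_append length_fillers length_coreD nout_def nsmall_def K_def)
      then show ?thesis
        using that by (simp add: vpad_def nout_def)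
    qed
  qed
  moreover have "redD \<noteq> []" "last redD = vpad"
    by (simp_all add: redD_def npad_def)
  ultimately have "discretize (map int redD) =
      map (\<lambda>j. int vpad - int (length (map int redD)) + 1 + int j) [0..<length (map int redD)]"
    by (intro discretize_eq_run) (force simp: last_map length_redD vpad_def nout_def)+
  then show ?thesis
    by (simp add: length_redD vpad_def nout_def)
qed

lemma mset_small_run:
  "mset (map (\<lambda>j. 2 + int j) [0..<nsmall]) =
     mset (map (int \<circ> Suc) fillers) + mset (map (int \<circ> coreX) [0..<n])"
proof -
  have "map (\<lambda>j. 2 + int j) [0..<nsmall] = map (int \<circ> Suc) [1..<Suc nsmall]"
    by (simp add: map_Suc_upt[symmetric] del: upt_Suc)
  moreover have "mset [1..<Suc nsmall] =
      mset fillers + mset (filter (\<lambda>c. \<not> c mod K \<noteq> 0) [1..<Suc nsmall])"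
    unfolding fillers_def mset_filter by (rule multiset_partition)
  ultimately have "mset (map (\<lambda>j. 2 + int j) [0..<nsmall]) = image_mset (int \<circ> Suc)
      (mset fillers + mset (filter (\<lambda>c. \<not> c mod K \<noteq> 0) [1..<Suc nsmall]))"
    by (simp only: mset_map)
  also have "\<dots> = mset (map (int \<circ> Suc) fillers) + mset (map (int \<circ> coreX) [0..<n])"
    unfolding mset_multiples by (simp add: coreX_def image_mset.compositionality comp_def)
  finally show ?thesis .
qed

lemma mset_discretize_redD:
  "mset (discretize (map int redD)) = mset (map (int \<circ> Suc) fillers) + mset (map (int \<circ> coreX) [0..<n]) +
     mset (map (\<lambda>q. int vpad - int npad + 1 + int q) [0..<npad])"
proof -
  have "[0..<nout] = [0..<nsmall] @ map (\<lambda>q. q + nsmall) [0..<npad]"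
    by (simp add: nout_def map_add_upt upt_add_eq_append[of 0 nsmall npad] add.commute)
  then have "discretize (map int redD) =
      map (\<lambda>j. 2 + int j) [0..<nsmall] @ map (\<lambda>q. int vpad - int npad + 1 + int q) [0..<npad]"
    by (simp add: discretize_redD vpad_def)
  then show ?thesis
    by (simp only: mset_append mset_small_run)
qed

lemma coreX_le: "b < n \<Longrightarrow> coreX b \<le> nsmall + 1"
proof -
  assume "b < n"
  then have "K * Suc b \<le> K * n"
    by (intro mult_le_mono2) simp
  then show ?thesis
    by (simp add: coreX_def nsmall_def mult.commute)
qed

lemma coreD_gt: "d \<in> set coreD \<Longrightarrow> nsmall + 1 < d"
  using coreD_bounds by (fastforce simp: coreD_def cbase_def)

lemma pos_match_iff_core:
  "pos_match redD redT \<longleftrightarrow> matching pm_rel (mset (map int coreD))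
     (mset (map (int \<circ> coreX) [0..<n])) (mset (map (int \<circ> coreT) [0..<n]))"
proof -
  define F where "F = mset (map (int \<circ> Suc) fillers)"
  define D where "D = mset (map int coreD)"
  define X where "X = mset (map (int \<circ> coreX) [0..<n])"
  define T where "T = mset (map (int \<circ> coreT) [0..<n])"
  let ?top_x = "map (\<lambda>q. int vpad - int npad + 1 + int q) [0..<npad]"
  let ?top_z = "map (\<lambda>q. 2 * int vpad - int npad + 1 + int q) [0..<npad]"
  have F: "\<forall>f \<in># F. f \<le> int nsmall + 1"
    using fillers_bounds by (auto simp: F_def)
  have D: "\<forall>d \<in># D. int nsmall + 1 < d \<and> d \<le> int (cbase + cmax)"
    using coreD_bounds coreD_gt by (fastforce simp: D_def)
  have X: "\<forall>x \<in># X. x \<le> int nsmall + 1"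
    using coreX_le by (force simp: X_def)
  have T: "\<forall>z \<in># T. 2 * (int nsmall + 1) < z \<and> z \<le> int (cbase + 1 + cmax)"
    using coreT_bounds by (fastforce simp: T_def)
  have "mset (map int redD) = (F + D) + replicate_mset npad (int vpad)"
    by (simp add: redD_def F_def D_def)
  moreover have "mset (discretize (map int redD)) = (F + X) + mset ?top_x"
    unfolding mset_discretize_redD F_def X_def ..
  moreover have "mset (map int redT) = (image_mset (\<lambda>f. 2 * f) F + T) + mset ?top_z"
    by (simp add: redT_def F_def T_def vpad_def of_nat_diff image_mset.compositionality comp_def add_ac)
  ultimately have "pos_match redD redT \<longleftrightarrow> matching pm_rel ((F + D) + replicate_mset npad (int vpad))
      ((F + X) + mset ?top_x) ((image_mset (\<lambda>f. 2 * f) F + T) + mset ?top_z)"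
    by (simp only: pos_match_iff_matching)
  also have "\<dots> \<longleftrightarrow> matching pm_rel (F + D) (F + X) (image_mset (\<lambda>f. 2 * f) F + T)"
    by (rule matching_pm_rel_padding_iff) (use F D X T in \<open>fastforce simp: vpad_def npad_def cbase_def\<close>)+
  also have "\<dots> \<longleftrightarrow> matching pm_rel D X T"
    by (rule matching_pm_rel_fillers_iff) (use F D T in auto)
  finally show ?thesis
    by (simp only: D_def X_def T_def)
qed

theorem in3dm_iff_pos_match: "in3dm a t \<longleftrightarrow> pos_match redD redT"
  using in3dm_iff_core pos_match_iff_core mset_coreD by (simp add: image_mset.compositionality)

lemma length_redD: "length redD = nout"
  by (simp add: redD_def length_fillers length_coreD nout_def nsmall_def K_def)

lemma length_redT: "length redT = nout"
  by (simp add: redT_def length_fillers nout_def nsmall_def K_def)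

lemma sorted_redD: "sorted redD"
proof -
  have "sorted (map Suc fillers)"
    using sorted_fillers by (simp add: sorted_map strict_sorted_imp_sorted)
  moreover have "sorted coreD"
    unfolding coreD_def cw_def
    by (intro sorted_filter[of _ _ "\<lambda>r. unrank r < n", unfolded map_map]) (simp add: sorted_iff_nth_mono compress_mono)
  moreover have "Suc c < d" if "c \<in> set fillers" "d \<in> set coreD" for c d
    using fillers_bounds[OF that(1)] coreD_bounds[OF that(2)] by (simp add: cbase_def)
  moreover have "d < vpad" if "d \<in> set coreD" for d
    using coreD_bounds[OF that] by (simp add: cbase_def vpad_def npad_def)
  moreover have "Suc c < vpad" if "c \<in> set fillers" for c
    using fillers_bounds[OF that] by (simp add: vpad_def npad_def)
  ultimately show ?thesis
    by (auto simp: redD_def sorted_append less_imp_le)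
qed

lemma distinct_coreT: "distinct (map coreT [0..<n])"
proof -
  have "inj_on coreT {0..<n}"
  proof (rule inj_onI)
    fix j1 j2 assume j: "j1 \<in> {0..<n}" "j2 \<in> {0..<n}" and "coreT j1 = coreT j2"
    obtain c1 c2 where "cw (rank (n + j1)) = K * c1" "cw (rank (n + j2)) = K * c2"
      using K_dvd_cw by (metis dvdE)
    with j \<open>coreT j1 = coreT j2\<close> have "K * c1 + j2 = K * c2 + j1"
      by (auto simp: coreT_def cbase_def)
    then have "(K * c1 + j2) mod K = (K * c2 + j1) mod K"
      by simp
    moreover have "j1 < K" "j2 < K"
      using j by (simp_all add: K_def)
    ultimately show "j1 = j2"
      by simp
  qed
  then show ?thesis
    by (simp add: distinct_map)
qed

lemma distinct_redT: "distinct redT"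
proof -
  have "distinct (map (\<lambda>c. 2 + 2 * c) fillers)"
    using sorted_fillers by (simp add: distinct_map inj_on_def strict_sorted_iff)
  moreover have "distinct (map (\<lambda>q. 2 * vpad - npad + 1 + q) [0..<npad])"
    by (simp add: distinct_map inj_on_def)
  moreover have "2 + 2 * c < coreT j" if "c \<in> set fillers" "j < n" for c j
    using fillers_bounds[OF that(1)] coreT_bounds[OF that(2)] by simp
  moreover have "coreT j < 2 * vpad - npad + 1 + q" if "j < n" for j q
    using coreT_bounds[OF that] by (simp add: vpad_def npad_def cbase_def)
  moreover have "2 + 2 * c < 2 * vpad - npad + 1 + q" if "c \<in> set fillers" for c q
    using fillers_bounds[OF that] by (simp add: vpad_def)
  ultimately show ?thesis
    using distinct_coreT by (fastforce simp: redT_def)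
qed

theorem pm_inst_red: "pm_inst redD redT"
proof -
  have "\<forall>d \<in> set redD. 0 < d"
    using coreD_bounds by (fastforce simp: redD_def cbase_def vpad_def)
  moreover have "\<forall>z \<in> set redT. 0 < z"
    using coreT_bounds by (fastforce simp: redT_def)
  ultimately show ?thesis
    unfolding pm_inst_def using length_redD length_redT sorted_redD distinct_redT by simp
qed

end

definition htriple ::
    "((nat \<Rightarrow> nat) \<Rightarrow> bool) \<Rightarrow> com \<Rightarrow> nat \<Rightarrow> ((nat \<Rightarrow> nat) \<Rightarrow> bool) \<Rightarrow> bool" where
  "htriple P c T Q \<longleftrightarrow> (\<forall>m. P m \<longrightarrow> (\<exists>k m'. big_step c m k m' \<and> k \<le> T \<and> Q m'))"

lemma htriple_assign: "htriple (\<lambda>m. Q (m(aval x m := aval e m))) (Assign x e) 1 Q"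
  unfolding htriple_def using big_step.Assign by blast

lemma htriple_skip: "htriple P SKIP 1 P"
  unfolding htriple_def using big_step.Skip by blast

lemma htriple_seq:
  assumes "htriple Q c2 T2 R" "htriple P c1 T1 Q"
  shows "htriple P (Seq c1 c2) (T1 + T2) R"
  using assms unfolding htriple_def by (meson add_mono big_step.Seq)

lemma htriple_if:
  assumes "htriple P1 c1 T1 Q" "htriple P2 c2 T2 Q"
  shows "htriple (\<lambda>m. if aval b m \<noteq> 0 then P1 m else P2 m) (If b c1 c2) (Suc (max T1 T2)) Q"
  unfolding htriple_def
proof (intro allI impI)
  fix m assume P: "if aval b m \<noteq> 0 then P1 m else P2 m"
  show "\<exists>k m'. big_step (If b c1 c2) m k m' \<and> k \<le> Suc (max T1 T2) \<and> Q m'"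
  proof (cases "aval b m = 0")
    case True
    with P assms(2) obtain k m' where "big_step c2 m k m'" "k \<le> T2" "Q m'"
      unfolding htriple_def by auto
    with True show ?thesis
      by (intro exI[of _ "Suc k"] exI[of _ m']) (simp add: big_step.IfF)
  next
    case False
    with P assms(1) obtain k m' where "big_step c1 m k m'" "k \<le> T1" "Q m'"
      unfolding htriple_def by auto
    with False show ?thesis
      by (intro exI[of _ "Suc k"] exI[of _ m']) (simp add: big_step.IfT)
  qed
qed

lemma htriple_pre: "htriple P c T Q \<Longrightarrow> (\<And>m. P' m \<Longrightarrow> P m) \<Longrightarrow> htriple P' c T Q"
  unfolding htriple_def by meson

lemma htriple_post: "htriple P c T Q \<Longrightarrow> (\<And>m. Q m \<Longrightarrow> Q' m) \<Longrightarrow> htriple P c T Q'"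
  unfolding htriple_def by meson

lemma htriple_time: "htriple P c T Q \<Longrightarrow> T \<le> T' \<Longrightarrow> htriple P c T' Q"
  unfolding htriple_def by (meson le_trans)

lemma htriple_while:
  assumes body: "\<And>j. j < J \<Longrightarrow> htriple (I j) c T (I (Suc j))"
    and continue: "\<And>j m. j < J \<Longrightarrow> I j m \<Longrightarrow> aval b m \<noteq> 0"
    and stop: "\<And>m. I J m \<Longrightarrow> aval b m = 0"
  shows "htriple (I 0) (While b c) (J * (T + 1) + 1) (I J)"
proof -
  have "htriple (I (J - d)) (While b c) (d * (T + 1) + 1) (I J)" if "d \<le> J" for d
    using that
  proof (induction d)
    case 0
    show ?case
      unfolding htriple_def using big_step.WhileF[OF stop] by fastforce
  next
    case (Suc d)
    let ?j = "J - Suc d"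
    have "?j < J" "Suc ?j = J - d"
      using Suc.prems by simp_all
    show ?case
      unfolding htriple_def
    proof (intro allI impI)
      fix m assume "I ?j m"
      then obtain k1 m1 where 1: "big_step c m k1 m1" "k1 \<le> T" "I (J - d) m1"
        using body[OF \<open>?j < J\<close>] \<open>Suc ?j = J - d\<close> unfolding htriple_def by metis
      then obtain k2 m2 where 2: "big_step (While b c) m1 k2 m2" "k2 \<le> d * (T + 1) + 1" "I J m2"
        using Suc unfolding htriple_def by auto
      have "big_step (While b c) m (Suc (k1 + k2)) m2"
        using big_step.WhileT[OF continue[OF \<open>?j < J\<close> \<open>I ?j m\<close>] 1(1) 2(1)] .
      then show "\<exists>k m'. big_step (While b c) m k m' \<and> k \<le> Suc d * (T + 1) + 1 \<and> I J m'"
        using 1(2) 2(2,3) by (intro exI[of _ "Suc (k1 + k2)"] exI[of _ m2]) simp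
    qed
  qed
  from this[of J] show ?thesis
    by simp
qed

definition cells :: "(nat \<Rightarrow> nat) \<Rightarrow> nat \<Rightarrow> nat \<Rightarrow> nat list" where
  "cells m s k = map (\<lambda>i. m (Suc (s + i))) [0..<k]"

lemma cells_Suc: "cells m s (Suc k) = cells m s k @ [m (Suc (s + k))]"
  by (simp add: cells_def)

lemma cells_add: "cells m s (k1 + k2) = cells m s k1 @ cells m (s + k1) k2"
proof -
  have "[0..<k1 + k2] = [0..<k1] @ map (\<lambda>i. i + k1) [0..<k2]"
    by (simp add: map_add_upt upt_add_eq_append[of 0 k1 k2] add.commute)
  then show ?thesis
    by (simp add: cells_def add_ac)
qed

lemma cells_0 [simp]: "cells m s 0 = []"
  by (simp add: cells_def)

lemma cells_upd: "x \<le> s \<or> s + k < x \<Longrightarrow> cells (m(x := v)) s k = cells m s k"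
  by (auto simp: cells_def)

lemma out_D_eq_cells: "out_D m = cells m 0 (m 0)"
  by (simp add: out_D_def cells_def)

lemma out_T_eq_cells: "out_T m = cells m (m 0) (m 0)"
  by (simp add: out_T_def cells_def)

text \<open>Initially cell 0 holds \<open>n\<close>; the set-up code uses the
  scratch cells \<open>2n + 1\<close> and \<open>2n + 2\<close> to compute the base address \<open>B0\<close> of a work area, stores
  \<open>n\<close> in cell \<open>B0\<close> and \<open>B0\<close> in cell 0. From then on \<open>Reg j\<close> is cell \<open>B0 + j\<close> (register 0 holds
  \<open>n\<close>, register 1 holds \<open>K\<close>), and the tables of \<open>unrank\<close>, of \<open>cw\<close> and of the multiples
  \<open>K * g\<close> start at \<open>B0 + 20\<close>, \<open>B0 + 20 + 2n\<close> and \<open>B0 + 20 + 4n\<close>. The input \<open>a @ t\<close> occupies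
  the cells \<open>1, \<dots>, 2n\<close>, and the output lists \<open>D\<close> and \<open>T\<close> are written to the cells \<open>1, \<dots>, nout\<close>
  and \<open>nout + 1, \<dots>, 2 nout\<close>, all below \<open>B0\<close>.\<close>

definition RegA :: "nat \<Rightarrow> aexp" where "RegA j = Plus (Mem (N 0)) (N j)"
definition Reg :: "nat \<Rightarrow> aexp" where "Reg j = Mem (RegA j)"
definition TwoN :: aexp where "TwoN = Plus (Reg 0) (Reg 0)"
definition UnrankA :: "aexp \<Rightarrow> aexp" where "UnrankA e = Plus (Plus (Mem (N 0)) (N 20)) e"
definition CwA :: "aexp \<Rightarrow> aexp" where "CwA e = UnrankA (Plus TwoN e)"
definition MultA :: "aexp \<Rightarrow> aexp" where "MultA e = UnrankA (Plus (Plus TwoN TwoN) e)"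
definition Inp :: "aexp \<Rightarrow> aexp" where "Inp e = Mem (Plus (N 1) e)"
definition OutA :: "aexp \<Rightarrow> aexp" where "OutA e = Plus (N 1) e"
definition ScratchA :: "nat \<Rightarrow> aexp" where "ScratchA j = Plus (Plus (Mem (N 0)) (Mem (N 0))) (N (Suc j))"
definition Scratch :: "nat \<Rightarrow> aexp" where "Scratch j = Mem (ScratchA j)"
definition incr :: "nat \<Rightarrow> com" where "incr j = Assign (RegA j) (Plus (Reg j) (N 1))"

lemma aval_RegA [simp]: "aval (RegA j) m = m 0 + j" by (simp add: RegA_def)
lemma aval_Reg [simp]: "aval (Reg j) m = m (m 0 + j)" by (simp add: Reg_def)
lemma aval_TwoN [simp]: "aval TwoN m = 2 * m (m 0)" by (simp add: TwoN_def)
lemma aval_UnrankA [simp]: "aval (UnrankA e) m = m 0 + 20 + aval e m" by (simp add: UnrankA_def)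
lemma aval_CwA [simp]: "aval (CwA e) m = m 0 + 20 + 2 * m (m 0) + aval e m" by (simp add: CwA_def add.assoc)
lemma aval_MultA [simp]: "aval (MultA e) m = m 0 + 20 + 4 * m (m 0) + aval e m" by (simp add: MultA_def add.assoc)
lemma aval_Inp [simp]: "aval (Inp e) m = m (Suc (aval e m))" by (simp add: Inp_def)
lemma aval_OutA [simp]: "aval (OutA e) m = Suc (aval e m)" by (simp add: OutA_def)
lemma aval_ScratchA [simp]: "aval (ScratchA j) m = 2 * m 0 + Suc j" by (simp add: ScratchA_def)
lemma aval_Scratch [simp]: "aval (Scratch j) m = m (2 * m 0 + Suc j)" by (simp add: Scratch_def)

definition set_base_step :: com where
  "set_base_step = Seq (Assign (ScratchA 1) (Plus (Scratch 1) (Scratch 1)))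
     (Seq (Assign (ScratchA 1) (Plus (Scratch 1) (Scratch 1)))
     (Seq (Assign (ScratchA 1) (Plus (Scratch 1) (Scratch 1)))
     (Seq (Assign (ScratchA 1) (Plus (Scratch 1) (Scratch 1)))
     (Seq (Assign (ScratchA 1) (Plus (Scratch 1) (Scratch 1)))
          (Assign (ScratchA 0) (Plus (Scratch 0) (N 1)))))))"

definition set_base :: com where
  "set_base = Seq (Seq (Assign (ScratchA 0) (N 0)) (Assign (ScratchA 1) (N 1)))
     (Seq (While (Minus (Plus (Mem (N 0)) (N 1)) (Scratch 0)) set_base_step)
     (Seq (Assign (Scratch 1) (Mem (N 0))) (Assign (N 0) (Scratch 1))))"

definition set_K :: com where "set_K = Assign (RegA 1) (Plus (Reg 0) (N 1))"

definition mult_table_step :: com where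
  "mult_table_step = Seq (Assign (MultA (Reg 3)) (Reg 5)) (Seq (Assign (RegA 5) (Plus (Reg 5) (Reg 1))) (incr 3))"

definition mult_table :: com where
  "mult_table = Seq (Seq (Assign (RegA 3) (N 0)) (Assign (RegA 5) (N 0)))
     (While (Minus (Plus (Reg 1) (N 1)) (Reg 3)) mult_table_step)"

definition count_step :: com where
  "count_step = Seq (If (Minus (Inp (Reg 2)) (Inp (Reg 3))) (incr 4)
     (If (Minus (Reg 2) (Reg 3)) (If (Minus (Inp (Reg 3)) (Inp (Reg 2))) SKIP (incr 4)) SKIP))
     (incr 3)"

definition rank_step :: com where
  "rank_step = Seq (Seq (Assign (RegA 4) (N 0)) (Assign (RegA 3) (N 0)))
     (Seq (While (Minus TwoN (Reg 3)) count_step) (Seq (Assign (UnrankA (Reg 4)) (Reg 2)) (incr 2)))"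

definition cw_step :: com where
  "cw_step = Seq (Assign (RegA 6) (Minus (Inp (Mem (UnrankA (Reg 3)))) (Inp (Mem (UnrankA (Minus (Reg 3) (N 1)))))))
     (Seq (If (Minus (Reg 1) (Reg 6)) (Assign (RegA 5) (Plus (Reg 5) (Mem (MultA (Reg 6)))))
                                      (Assign (RegA 5) (Plus (Reg 5) (Mem (MultA (Reg 1))))))
     (Seq (Assign (CwA (Reg 3)) (Reg 5)) (incr 3)))"

definition cw_table :: com where
  "cw_table = Seq (Seq (Assign (RegA 5) (N 0)) (Seq (Assign (CwA (N 0)) (N 0)) (Assign (RegA 3) (N 1))))
     (Seq (While (Minus TwoN (Reg 3)) cw_step) (Assign (RegA 14) (Reg 5)))"

definition set_sizes :: com where
  "set_sizes = Seq (Assign (RegA 7) (Mem (MultA (Reg 0))))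
     (Seq (Assign (RegA 8) (Plus (Plus (Plus (Plus (Reg 7) (Reg 0)) (Reg 14)) (N 1))
                            (Plus (Plus (Plus (Reg 7) (Reg 0)) (Reg 14)) (N 1))))
     (Seq (Assign (RegA 9) (Plus (Plus (Reg 8) (Reg 7)) (N 1)))
          (Assign (RegA 10) (Plus (Reg 7) (Reg 8)))))"

definition filler_step :: com where
  "filler_step = Seq (incr 12) (Seq (incr 13) (If (Minus (Reg 1) (Reg 13))
     (Seq (Assign (OutA (Reg 11)) (Plus (Reg 12) (N 1)))
       (Seq (Assign (OutA (Plus (Plus (Reg 10) (Reg 0)) (Reg 11))) (Plus (Plus (Reg 12) (Reg 12)) (N 2)))
         (incr 11)))
     (Assign (RegA 13) (N 0))))"

definition write_fillers :: com where
  "write_fillers = Seq (Seq (Assign (RegA 11) (N 0)) (Seq (Assign (RegA 12) (N 0)) (Assign (RegA 13) (N 0))))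
     (While (Minus (Reg 7) (Reg 12)) filler_step)"

definition unrank_table :: com where
  "unrank_table = Seq (Assign (RegA 2) (N 0)) (While (Minus TwoN (Reg 2)) rank_step)"

definition Cbase :: aexp where "Cbase = Plus (Plus (Plus (N 1) (Reg 7)) (Reg 7)) (Reg 0)"

lemma aval_Cbase [simp]: "aval Cbase m = 1 + 2 * m (m 0 + 7) + m (m 0)"
  by (simp add: Cbase_def)

definition core_step :: com where
  "core_step = Seq (Assign (RegA 2) (Mem (UnrankA (Reg 3))))
     (Seq (If (Minus (Reg 0) (Reg 2))
        (Seq (Assign (OutA (Reg 11)) (Plus Cbase (Mem (CwA (Reg 3))))) (incr 11))
        (Assign (OutA (Plus (Reg 10) (Minus (Reg 2) (Reg 0))))
          (Minus (Plus (Plus Cbase (N 1)) (Mem (CwA (Reg 3)))) (Minus (Reg 2) (Reg 0)))))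
     (incr 3))"

definition write_core :: com where
  "write_core = Seq (Assign (RegA 3) (N 0)) (While (Minus TwoN (Reg 3)) core_step)"

definition pad_step :: com where
  "pad_step = Seq (Assign (OutA (Plus (Reg 7) (Reg 15))) (Reg 9))
     (Seq (Assign (OutA (Plus (Plus (Reg 10) (Reg 7)) (Reg 15)))
        (Plus (Plus (Minus (Plus (Reg 9) (Reg 9)) (Reg 8)) (N 1)) (Reg 15)))
     (incr 15))"

definition write_padding :: com where
  "write_padding = Seq (Assign (RegA 15) (N 0)) (While (Minus (Reg 8) (Reg 15)) pad_step)"

definition set_length :: com where "set_length = Assign (N 0) (Reg 10)"

definition reduction :: com where
  "reduction = Seq set_base (Seq set_K (Seq mult_table (Seq unrank_table (Seq cw_table (Seq set_sizes
     (Seq write_fillers (Seq write_core (Seq write_padding set_length))))))))"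

context in3dm_instance
begin

text \<open>The work area must lie above the output, whose length is not known when it is set up; doubling
  five times per element of \<open>a\<close> reaches the sufficient bound \<open>32 ^ K\<close> in linear time.\<close>

definition B0 :: nat where "B0 = 32 ^ K"

lemma cmax_le: "cmax \<le> 2 * K ^ 3"
proof -
  have "cmax \<le> (2 * n - 1) * K * K"
    unfolding cmax_def cw_def by (rule compress_le)
  also have "\<dots> \<le> 2 * K * K * K"
    by (intro mult_le_mono1) (simp add: K_def)
  finally show ?thesis
    by (simp add: power3_eq_cube)
qed

lemma nout_le: "nout \<le> 11 * K ^ 3"
proof -
  have "K \<le> K ^ 3" "K * K \<le> K ^ 3" "1 \<le> K ^ 3"
    by (simp_all add: K_def power3_eq_cube)
  then show ?thesis
    using cmax_le by (simp add: nout_def npad_def nsmall_def K_def)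
qed

lemma B0_big: "2 * nout + 2 * n + 4 \<le> B0"
proof -
  have "22 * k ^ 3 + 2 * k + 4 \<le> 32 ^ k" if "1 \<le> k" for k :: nat
    using that
  proof (induction k rule: dec_induct)
    case (step k)
    have "Suc k ^ 3 \<le> (2 * k) ^ 3"
      using step(1) by (intro power_mono) simp_all
    then show ?case
      using step(3) by simp
  qed simp
  from this[of K] show ?thesis
    using nout_le by (simp add: B0_def K_def)
qed

definition input :: "(nat \<Rightarrow> nat) \<Rightarrow> bool" where
  "input m \<longleftrightarrow> (\<forall>i < 2 * n. m (Suc i) = w ! i)"

definition based :: "(nat \<Rightarrow> nat) \<Rightarrow> bool" where
  "based m \<longleftrightarrow> m 0 = B0 \<and> m B0 = n \<and> input m"

lemma set_base_correct:
  "htriple (\<lambda>m. m = enc_in a t) set_base (2 + (K * (6 + 1) + 1 + 2)) based"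
proof -
  define I where "I j m \<longleftrightarrow> m 0 = n \<and> input m \<and> m (2 * n + 1) = j \<and> m (2 * n + 2) = 32 ^ j" for j m
  have init: "htriple (\<lambda>m. m = enc_in a t) (Seq (Assign (ScratchA 0) (N 0)) (Assign (ScratchA 1) (N 1))) 2 (I 0)"
    by (rule htriple_time[OF htriple_pre[OF htriple_seq[OF htriple_assign htriple_assign]]])
      (auto simp: I_def input_def enc_in_def w_def length_t nth_append)
  have loop: "htriple (I 0) (While (Minus (Plus (Mem (N 0)) (N 1)) (Scratch 0)) set_base_step)
      (K * (6 + 1) + 1) (I K)"
  proof (rule htriple_while)
    show "htriple (I j) set_base_step 6 (I (Suc j))" for j
      unfolding set_base_step_def
      by (rule htriple_time, rule htriple_pre, (rule htriple_seq htriple_assign)+)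
        (auto simp: I_def input_def)
  qed (auto simp: I_def K_def)
  have finish: "htriple (I K) (Seq (Assign (Scratch 1) (Mem (N 0))) (Assign (N 0) (Scratch 1))) 2 based"
    by (rule htriple_time[OF htriple_pre[OF htriple_seq[OF htriple_assign htriple_assign]]])
      (use B0_big in \<open>auto simp: I_def input_def based_def B0_def\<close>)
  show ?thesis
    unfolding set_base_def by (rule htriple_seq[OF htriple_seq[OF finish loop] init])
qed

definition with_K :: "(nat \<Rightarrow> nat) \<Rightarrow> bool" where
  "with_K m \<longleftrightarrow> based m \<and> m (B0 + 1) = K"

lemma set_K_correct: "htriple based set_K 1 with_K"
  unfolding set_K_def
  by (rule htriple_pre[OF htriple_assign]) (use B0_big in \<open>auto simp: based_def with_K_def input_def K_def\<close>)

definition mult_tab :: "(nat \<Rightarrow> nat) \<Rightarrow> bool" where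
  "mult_tab m \<longleftrightarrow> (\<forall>g \<le> K. m (B0 + 20 + 4 * n + g) = K * g)"

definition with_mult :: "(nat \<Rightarrow> nat) \<Rightarrow> bool" where
  "with_mult m \<longleftrightarrow> with_K m \<and> mult_tab m"

lemma mult_table_correct: "htriple with_K mult_table (2 + ((K + 1) * (3 + 1) + 1)) with_mult"
proof -
  define I where "I j m \<longleftrightarrow> with_K m \<and> m (B0 + 3) = j \<and> m (B0 + 5) = K * j \<and>
    (\<forall>g < j. m (B0 + 20 + 4 * n + g) = K * g)" for j m
  have init: "htriple with_K (Seq (Assign (RegA 3) (N 0)) (Assign (RegA 5) (N 0))) 2 (I 0)"
    by (rule htriple_time[OF htriple_pre[OF htriple_seq[OF htriple_assign htriple_assign]]])
      (use B0_big in \<open>auto simp: I_def with_K_def based_def input_def\<close>)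
  have loop: "htriple (I 0) (While (Minus (Plus (Reg 1) (N 1)) (Reg 3)) mult_table_step)
      ((K + 1) * (3 + 1) + 1) (I (K + 1))"
  proof (rule htriple_while)
    show "htriple (I j) mult_table_step 3 (I (Suc j))" for j
      unfolding mult_table_step_def incr_def
      by (rule htriple_time, rule htriple_pre, (rule htriple_seq htriple_assign)+)
        (use B0_big in \<open>auto simp: I_def with_K_def based_def input_def less_Suc_eq\<close>)
  qed (auto simp: I_def with_K_def based_def)
  show ?thesis
    unfolding mult_table_def
    by (rule htriple_seq[OF htriple_post[OF loop] init]) (auto simp: I_def with_mult_def mult_tab_def)
qed

definition ranked :: "nat \<Rightarrow> (nat \<Rightarrow> nat) \<Rightarrow> bool" where
  "ranked k m \<longleftrightarrow> with_mult m \<and> m (B0 + 2) = k \<and> (\<forall>k' < k. m (B0 + 20 + rank k') = k')"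

definition counting :: "nat \<Rightarrow> nat \<Rightarrow> (nat \<Rightarrow> nat) \<Rightarrow> bool" where
  "counting k j m \<longleftrightarrow> ranked k m \<and> m (B0 + 3) = j \<and>
     m (B0 + 4) = length (filter (\<lambda>l. precedes l k) [0..<j])"

lemma count_step_correct:
  assumes "k < 2 * n" "j < 2 * n"
  shows "htriple (counting k j) count_step 5 (counting k (Suc j))"
  unfolding count_step_def incr_def
  apply (rule htriple_time, rule htriple_pre, (rule htriple_seq htriple_assign htriple_if htriple_skip)+)
  using assms B0_big
  by (auto simp: counting_def ranked_def with_mult_def with_K_def based_def input_def mult_tab_def
      precedes_def split: if_splits)

lemma rank_step_correct:
  assumes "k < 2 * n"
  shows "htriple (ranked k) rank_step (2 + ((2 * n) * (5 + 1) + 1 + 2)) (ranked (Suc k))"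
proof -
  have init: "htriple (ranked k) (Seq (Assign (RegA 4) (N 0)) (Assign (RegA 3) (N 0))) 2 (counting k 0)"
    by (rule htriple_time[OF htriple_pre[OF htriple_seq[OF htriple_assign htriple_assign]]])
      (use B0_big in \<open>auto simp: counting_def ranked_def with_mult_def with_K_def based_def
        input_def mult_tab_def\<close>)
  have loop: "htriple (counting k 0) (While (Minus TwoN (Reg 3)) count_step) ((2 * n) * (5 + 1) + 1)
      (counting k (2 * n))"
    by (rule htriple_while[where I = "counting k", OF count_step_correct[OF assms]])
      (auto simp: counting_def ranked_def with_mult_def with_K_def based_def)
  have new_rank: "rank k' \<noteq> rank k" if "k' < k" for k'
    using that assms bij_betw_imp_inj_on[OF bij_betw_rank] by (auto simp: inj_on_def)
  have store: "htriple (counting k (2 * n)) (Seq (Assign (UnrankA (Reg 4)) (Reg 2)) (incr 2)) 2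
      (ranked (Suc k))"
    unfolding incr_def
    by (rule htriple_time[OF htriple_pre[OF htriple_seq[OF htriple_assign htriple_assign]]])
      (use B0_big rank_less[OF assms] new_rank in \<open>auto simp: counting_def ranked_def with_mult_def with_K_def
        based_def input_def mult_tab_def rank_def less_Suc_eq\<close>)
  show ?thesis
    unfolding rank_step_def by (rule htriple_seq[OF htriple_seq[OF store loop] init])
qed

definition unrank_tab :: "(nat \<Rightarrow> nat) \<Rightarrow> bool" where
  "unrank_tab m \<longleftrightarrow> (\<forall>r < 2 * n. m (B0 + 20 + r) = unrank r)"

definition with_unrank :: "(nat \<Rightarrow> nat) \<Rightarrow> bool" where
  "with_unrank m \<longleftrightarrow> with_mult m \<and> unrank_tab m"

lemma unrank_table_correct:
  "htriple with_mult unrank_table (1 + (2 * n * (2 + (2 * n * (5 + 1) + 1 + 2) + 1) + 1)) with_unrank"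
proof -
  have init: "htriple with_mult (Assign (RegA 2) (N 0)) 1 (ranked 0)"
    by (rule htriple_pre[OF htriple_assign]) (use B0_big in \<open>auto simp: ranked_def with_mult_def
        with_K_def based_def input_def mult_tab_def\<close>)
  have loop: "htriple (ranked 0) (While (Minus TwoN (Reg 2)) rank_step)
      (2 * n * (2 + (2 * n * (5 + 1) + 1 + 2) + 1) + 1) (ranked (2 * n))"
    by (rule htriple_while[where I = ranked, OF rank_step_correct]) (auto simp: ranked_def with_mult_def with_K_def based_def)
  have "with_unrank m" if "ranked (2 * n) m" for m
    using that unfolding ranked_def with_unrank_def unrank_tab_def
    by (metis rank_unrank unrank_less)
  then show ?thesis
    unfolding unrank_table_def by (rule htriple_seq[OF htriple_post[OF loop] init])
qed

definition summing :: "nat \<Rightarrow> (nat \<Rightarrow> nat) \<Rightarrow> bool" where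
  "summing j m \<longleftrightarrow> with_unrank m \<and> m (B0 + 3) = Suc j \<and> m (B0 + 5) = cw j \<and>
     (\<forall>i \<le> j. m (B0 + 20 + 2 * n + i) = cw i)"

lemma cw_step_correct:
  assumes "j < 2 * n - 1"
  shows "htriple (summing j) cw_step 5 (summing (Suc j))"
  unfolding cw_step_def incr_def
  apply (rule htriple_time, rule htriple_pre, (rule htriple_seq htriple_assign htriple_if)+)
  subgoal for m
  proof -
    assume inv: "summing j m"
    have j: "Suc j < 2 * n"
      using assms by simp
    have tab: "\<forall>r < 2 * n. m (B0 + 20 + r) = unrank r"
      using inv by (simp add: summing_def with_unrank_def unrank_tab_def)
    have "m (B0 + 20 + Suc j) = unrank (Suc j)" "m (B0 + 20 + j) = unrank j"
      using tab[rule_format, of "Suc j"] tab[rule_format, of j] j by simp_all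
    moreover have "m (Suc (unrank i)) = w ! unrank i" if "i < 2 * n" for i
      using inv unrank_less[OF that]
      by (simp add: summing_def with_unrank_def with_mult_def with_K_def based_def input_def)
    ultimately have "m (Suc (m (B0 + 20 + Suc j))) - m (Suc (m (B0 + 20 + j))) = wsort (Suc j) - wsort j"
      using j by (simp add: wsort_def)
    moreover have "cw (Suc j) = cw j + K * min (wsort (Suc j) - wsort j) K"
      unfolding cw_def by (rule compress_Suc)
    ultimately show ?thesis
      using inv j B0_big
      by (auto simp: summing_def with_unrank_def unrank_tab_def with_mult_def mult_tab_def with_K_def
          based_def input_def le_Suc_eq min_def)
  qed
  by simp

definition cw_tab :: "(nat \<Rightarrow> nat) \<Rightarrow> bool" where
  "cw_tab m \<longleftrightarrow> (\<forall>r < 2 * n. m (B0 + 20 + 2 * n + r) = cw r)"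

definition with_cw :: "(nat \<Rightarrow> nat) \<Rightarrow> bool" where
  "with_cw m \<longleftrightarrow> with_unrank m \<and> cw_tab m \<and> m (B0 + 14) = cmax"

lemma cw_table_correct: "htriple with_unrank cw_table (3 + ((2 * n - 1) * (5 + 1) + 1 + 1)) with_cw"
proof -
  have init: "htriple with_unrank
      (Seq (Assign (RegA 5) (N 0)) (Seq (Assign (CwA (N 0)) (N 0)) (Assign (RegA 3) (N 1)))) 3 (summing 0)"
    by (rule htriple_time, rule htriple_pre, (rule htriple_seq htriple_assign)+)
      (use B0_big in \<open>auto simp: summing_def with_unrank_def unrank_tab_def with_mult_def mult_tab_def
        with_K_def based_def input_def cw_def compress_def\<close>)
  have loop: "htriple (summing 0) (While (Minus TwoN (Reg 3)) cw_step) ((2 * n - 1) * (5 + 1) + 1)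
      (summing (2 * n - 1))"
    by (rule htriple_while[where I = summing, OF cw_step_correct])
      (auto simp: summing_def with_unrank_def with_mult_def with_K_def based_def)
  have finish: "htriple (summing (2 * n - 1)) (Assign (RegA 14) (Reg 5)) 1 with_cw"
    by (rule htriple_pre[OF htriple_assign])
      (use B0_big in \<open>auto simp: summing_def with_cw_def cw_tab_def cmax_def with_unrank_def unrank_tab_def
        with_mult_def mult_tab_def with_K_def based_def input_def\<close>)
  show ?thesis
    unfolding cw_table_def by (rule htriple_seq[OF htriple_seq[OF finish loop] init])
qed

definition ready :: "(nat \<Rightarrow> nat) \<Rightarrow> bool" where
  "ready m \<longleftrightarrow> m 0 = B0 \<and> m B0 = n \<and> m (B0 + 1) = K \<and> unrank_tab m \<and> cw_tab m \<and>
     m (B0 + 7) = nsmall \<and> m (B0 + 8) = npad \<and> m (B0 + 9) = vpad \<and> m (B0 + 10) = nout"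

lemma set_sizes_correct: "htriple with_cw set_sizes 4 ready"
  unfolding set_sizes_def
  apply (rule htriple_time, rule htriple_pre, (rule htriple_seq htriple_assign)+)
  subgoal for m
  proof -
    assume "with_cw m"
    moreover have "m (B0 + 20 + 4 * n + n) = nsmall" if "mult_tab m"
      using that[unfolded mult_tab_def, rule_format, of n] by (simp add: nsmall_def K_def)
    ultimately show ?thesis
      by (simp add: with_cw_def with_unrank_def with_mult_def with_K_def based_def ready_def unrank_tab_def
          cw_tab_def npad_def vpad_def nout_def algebra_simps)
  qed
  by simp

lemma ready_upd_out: "0 < x \<Longrightarrow> x < B0 \<Longrightarrow> ready (m(x := v)) \<longleftrightarrow> ready m"
  by (auto simp: ready_def unrank_tab_def cw_tab_def)

definition fillers_upto :: "nat \<Rightarrow> nat list" where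
  "fillers_upto j = filter (\<lambda>c. c mod K \<noteq> 0) [1..<Suc j]"

definition filling :: "nat \<Rightarrow> (nat \<Rightarrow> nat) \<Rightarrow> bool" where
  "filling j m \<longleftrightarrow> ready m \<and> m (B0 + 12) = j \<and> m (B0 + 13) = j mod K \<and>
     m (B0 + 11) = length (fillers_upto j) \<and>
     cells m 0 (length (fillers_upto j)) = map Suc (fillers_upto j) \<and>
     cells m (nout + n) (length (fillers_upto j)) = map (\<lambda>c. 2 + 2 * c) (fillers_upto j)"

definition ready_cells :: "nat set" where
  "ready_cells = {0, B0, B0 + 1} \<union> {B0 + 7..B0 + 10} \<union> {B0 + 20..<B0 + 20 + 4 * n}"

lemma ready_cong: "\<forall>x \<in> ready_cells. m' x = m x \<Longrightarrow> ready m' \<longleftrightarrow> ready m"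
  by (simp add: ready_def ready_cells_def unrank_tab_def cw_tab_def)

lemma cells_cong: "\<forall>i < k. m' (Suc (s + i)) = m (Suc (s + i)) \<Longrightarrow> cells m' s k = cells m s k"
  by (simp add: cells_def)

lemma length_fillers_upto: "length (fillers_upto j) \<le> j"
  unfolding fillers_upto_def by (metis length_filter_le length_upt diff_Suc_1)

lemma fillers_upto_Suc:
  "fillers_upto (Suc j) = fillers_upto j @ (if Suc j mod K \<noteq> 0 then [Suc j] else [])"
  by (simp add: fillers_upto_def)

lemma filling_SucI:
  assumes inv: "filling j m" and "j < nsmall"
    and regs: "m' (B0 + 12) = Suc j" "m' (B0 + 13) = Suc j mod K"
      "m' (B0 + 11) = length (fillers_upto (Suc j))"
    and written: "Suc j mod K \<noteq> 0 \<Longrightarrow> m' (Suc (length (fillers_upto j))) = Suc (Suc j) \<and>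
      m' (Suc (nout + n + length (fillers_upto j))) = 2 + 2 * Suc j"
    and frame: "\<forall>x. x \<notin> {B0 + 11, B0 + 12, B0 + 13, Suc (length (fillers_upto j)),
      Suc (nout + n + length (fillers_upto j))} \<longrightarrow> m' x = m x"
  shows "filling (Suc j) m'"
proof -
  let ?L = "length (fillers_upto j)"
  have "?L \<le> j"
    by (rule length_fillers_upto)
  then have L: "Suc (nout + n + ?L) < B0" "?L < nsmall"
    using assms(2) B0_big by (simp_all add: nout_def)
  have "ready m'"
    using inv frame L by (subst ready_cong[of m' m]) (auto simp: filling_def ready_cells_def)
  moreover have "cells m' 0 ?L = cells m 0 ?L" "cells m' (nout + n) ?L = cells m (nout + n) ?L"
    using L by (auto intro!: cells_cong frame[rule_format] simp: nout_def)
  ultimately show ?thesis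
    using inv regs written by (auto simp: filling_def cells_Suc fillers_upto_Suc)
qed

lemma filler_step_correct:
  assumes "j < nsmall"
  shows "htriple (filling j) filler_step 6 (filling (Suc j))"
  unfolding filler_step_def incr_def
  apply (rule htriple_time, rule htriple_pre, (rule htriple_seq htriple_assign htriple_if)+)
  subgoal for m
  proof -
    assume inv: "filling j m"
    let ?L = "length (fillers_upto j)"
    have "?L \<le> j"
      by (rule length_fillers_upto)
    then have L: "Suc (nout + n + ?L) < B0" "?L < nout + n"
      using assms B0_big by (simp_all add: nout_def)
    have regs: "m 0 = B0" "m B0 = n" "m (Suc B0) = K" "m (B0 + 10) = nout" "m (B0 + 12) = j"
      "m (B0 + 13) = j mod K" "m (B0 + 11) = ?L"
      using inv by (simp_all add: filling_def ready_def)
    have "j mod K < K"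
      by (simp add: K_def)
    then have modK: "Suc j mod K = (if K \<le> Suc (j mod K) then 0 else Suc (j mod K))"
      using mod_Suc[of j K] by simp
    have "0 < nout"
      by (simp add: nout_def npad_def)
    then show ?thesis
      apply (simp add: regs)
      apply (intro conjI impI; rule filling_SucI[OF inv assms])
      using L modK apply (simp_all add: regs fillers_upto_Suc)
      done
  qed
  by simp

definition write_fillers_time :: nat where
  "write_fillers_time = 3 + (nsmall * (6 + 1) + 1)"

definition fillers_written :: "(nat \<Rightarrow> nat) \<Rightarrow> bool" where
  "fillers_written m \<longleftrightarrow> cells m 0 (n * n) = map Suc fillers \<and>
     cells m (nout + n) (n * n) = map (\<lambda>c. 2 + 2 * c) fillers"

lemma write_fillers_correct:
  "htriple ready write_fillers write_fillers_time (\<lambda>m. ready m \<and> m (B0 + 11) = n * n \<and> fillers_written m)"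
proof -
  have init: "htriple ready (Seq (Assign (RegA 11) (N 0)) (Seq (Assign (RegA 12) (N 0)) (Assign (RegA 13) (N 0))))
      3 (filling 0)"
    by (rule htriple_time, rule htriple_pre, (rule htriple_seq htriple_assign)+)
      (auto simp: filling_def ready_def unrank_tab_def cw_tab_def fillers_upto_def cells_def)
  have loop: "htriple (filling 0) (While (Minus (Reg 7) (Reg 12)) filler_step) (nsmall * (6 + 1) + 1)
      (filling nsmall)"
    by (rule htriple_while[where I = filling, OF filler_step_correct]) (auto simp: filling_def ready_def)
  have "fillers_upto nsmall = fillers"
    by (simp add: fillers_upto_def fillers_def)
  then have "ready m \<and> m (B0 + 11) = n * n \<and> fillers_written m" if "filling nsmall m" for m
    using that by (simp add: filling_def fillers_written_def length_fillers)
  then show ?thesis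
    unfolding write_fillers_def write_fillers_time_def
    by (rule htriple_seq[OF htriple_post[OF loop] init])
qed

lemma nsmall_eq: "nsmall = n * n + n"
  by (simp add: nsmall_def K_def)

lemma layout_bounds: "nsmall < nout" "2 * nout + 2 < B0"
  using B0_big by (simp_all add: nout_def npad_def)

definition core_ranks_upto :: "nat \<Rightarrow> nat list" where
  "core_ranks_upto j = filter (\<lambda>r. unrank r < n) [0..<j]"

lemma core_ranks_upto_Suc:
  "core_ranks_upto (Suc j) = core_ranks_upto j @ (if unrank j < n then [j] else [])"
  by (simp add: core_ranks_upto_def)

lemma length_core_ranks_upto: "j \<le> 2 * n \<Longrightarrow> length (core_ranks_upto j) \<le> n"
proof -
  assume "j \<le> 2 * n"
  then have "[0..<2 * n] = [0..<j] @ [j..<2 * n]"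
    by (metis le0 le_add_diff_inverse upt_add_eq_append)
  then have "core_ranks_upto (2 * n) = core_ranks_upto j @ filter (\<lambda>r. unrank r < n) [j..<2 * n]"
    by (simp add: core_ranks_upto_def)
  moreover have "length (core_ranks_upto (2 * n)) = n"
    using length_coreD by (simp add: coreD_def core_ranks_upto_def)
  ultimately show ?thesis
    by (metis le_add1 length_append)
qed

definition coring :: "nat \<Rightarrow> (nat \<Rightarrow> nat) \<Rightarrow> bool" where
  "coring j m \<longleftrightarrow> ready m \<and> fillers_written m \<and> m (B0 + 3) = j \<and>
     m (B0 + 11) = n * n + length (core_ranks_upto j) \<and>
     cells m (n * n) (length (core_ranks_upto j)) = map (\<lambda>r. cbase + cw r) (core_ranks_upto j) \<and>
     (\<forall>i < n. rank (n + i) < j \<longrightarrow> m (Suc (nout + i)) = coreT i)"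

lemma coring_SucI:
  assumes inv: "coring j m" and "j < 2 * n"
  defines "L \<equiv> length (core_ranks_upto j)"
  defines "x \<equiv> (if unrank j < n then Suc (n * n + L) else Suc (nout + (unrank j - n)))"
  assumes regs: "m' (B0 + 3) = Suc j" "m' (B0 + 11) = n * n + length (core_ranks_upto (Suc j))"
    and written: "m' x = (if unrank j < n then cbase + cw j else coreT (unrank j - n))"
    and frame: "\<forall>y. y \<notin> {B0 + 2, B0 + 3, B0 + 11, x} \<longrightarrow> m' y = m y"
  shows "coring (Suc j) m'"
proof -
  have "L \<le> n"
    unfolding L_def using \<open>j < 2 * n\<close> by (intro length_core_ranks_upto) simp
  moreover have "L < n" if "unrank j < n"
    using length_core_ranks_upto[of "Suc j"] \<open>j < 2 * n\<close> that
    by (simp add: L_def core_ranks_upto_Suc)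
  moreover have "unrank j < 2 * n"
    using \<open>j < 2 * n\<close> by (rule unrank_less)
  ultimately have x: "n * n < x" "Suc (n * n + L) \<le> x" "x \<le> nout + n" "x < B0" "x \<noteq> 0"
    "unrank j < n \<Longrightarrow> x = Suc (n * n + L)"
    "\<not> unrank j < n \<Longrightarrow> x = Suc (nout + (unrank j - n)) \<and> unrank j - n < n"
    using B0_big by (auto simp: x_def nout_def nsmall_def npad_def K_def)
  have "ready m'"
    using inv frame x by (subst ready_cong[of m' m]) (auto simp: coring_def ready_cells_def)
  moreover have "fillers_written m'"
  proof -
    have "cells m' 0 (n * n) = cells m 0 (n * n)" "cells m' (nout + n) (n * n) = cells m (nout + n) (n * n)"
      using x nsmall_eq layout_bounds by (auto intro!: cells_cong frame[rule_format])
    then show ?thesis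
      using inv by (simp add: coring_def fillers_written_def)
  qed
  moreover have "cells m' (n * n) L = cells m (n * n) L"
    using x(2,4) by (intro cells_cong allI impI frame[rule_format]) auto
  then have "cells m' (n * n) (length (core_ranks_upto (Suc j))) =
      map (\<lambda>r. cbase + cw r) (core_ranks_upto (Suc j))"
    using inv written by (simp add: coring_def core_ranks_upto_Suc cells_Suc x_def split: if_split_asm flip: L_def)
  moreover have "m' (Suc (nout + i)) = coreT i" if "i < n" "rank (n + i) < Suc j" for i
  proof (cases "rank (n + i) = j")
    case True
    then have "unrank j = n + i"
      using that unrank_rank[of "n + i"] by simp
    then show ?thesis
      using written x(7) by (simp add: x_def)
  next
    case False
    then have "unrank j \<noteq> n + i"
      using rank_unrank[OF \<open>j < 2 * n\<close>] by auto
    then have "m' (Suc (nout + i)) = m (Suc (nout + i))"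
      using x that nsmall_eq layout_bounds \<open>L \<le> n\<close> by (intro frame[rule_format]) (auto simp: x_def)
    then show ?thesis
      using inv that False by (simp add: coring_def)
  qed
  ultimately show ?thesis
    using regs by (simp add: coring_def)
qed

lemma core_step_correct:
  assumes "j < 2 * n"
  shows "htriple (coring j) core_step 5 (coring (Suc j))"
  unfolding core_step_def incr_def
  apply (rule htriple_time, rule htriple_pre, (rule htriple_seq htriple_assign htriple_if)+)
  subgoal for m
  proof -
    assume inv: "coring j m"
    let ?L = "length (core_ranks_upto j)"
    have regs: "m 0 = B0" "m B0 = n" "m (B0 + 3) = j" "m (B0 + 7) = nsmall" "m (B0 + 10) = nout"
      "m (B0 + 11) = n * n + ?L" "m (B0 + 20 + j) = unrank j" "m (B0 + 20 + 2 * n + j) = cw j"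
      using inv assms by (simp_all add: coring_def ready_def unrank_tab_def cw_tab_def)
    have "?L \<le> n"
      using assms by (intro length_core_ranks_upto) simp
    then have "Suc (n * n + ?L) < B0" "Suc (nout + (unrank j - n)) < B0"
      using nsmall_eq layout_bounds unrank_less[OF assms] by linarith+
    moreover have "rank (n + (unrank j - n)) = j" if "\<not> unrank j < n"
      using that rank_unrank[OF assms] by simp
    ultimately show ?thesis
      apply (simp add: regs)
      apply (intro conjI impI; rule coring_SucI[OF inv assms])
      apply (simp_all add: regs core_ranks_upto_Suc coreT_def cbase_def nsmall_eq)
      done
  qed
  by simp

definition write_core_time :: nat where
  "write_core_time = 1 + (2 * n * (5 + 1) + 1)"

definition core_written :: "(nat \<Rightarrow> nat) \<Rightarrow> bool" where
  "core_written m \<longleftrightarrow> cells m (n * n) n = coreD \<and> cells m nout n = map coreT [0..<n]"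

lemma write_core_correct:
  "htriple (\<lambda>m. ready m \<and> m (B0 + 11) = n * n \<and> fillers_written m) write_core write_core_time
     (\<lambda>m. ready m \<and> fillers_written m \<and> core_written m)"
proof -
  have init: "htriple (\<lambda>m. ready m \<and> m (B0 + 11) = n * n \<and> fillers_written m) (Assign (RegA 3) (N 0)) 1
      (coring 0)"
    by (rule htriple_pre[OF htriple_assign])
      (use nsmall_eq layout_bounds in \<open>auto simp: coring_def ready_def unrank_tab_def cw_tab_def fillers_written_def
        core_ranks_upto_def cells_upd\<close>)
  have loop: "htriple (coring 0) (While (Minus TwoN (Reg 3)) core_step) (2 * n * (5 + 1) + 1)
      (coring (2 * n))"
    by (rule htriple_while[where I = coring, OF core_step_correct]) (auto simp: coring_def ready_def)
  have "core_ranks_upto (2 * n) = filter (\<lambda>r. unrank r < n) [0..<2 * n]"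
    by (simp add: core_ranks_upto_def)
  then have "ready m \<and> fillers_written m \<and> core_written m" if "coring (2 * n) m" for m
    using that length_coreD rank_less
    by (auto simp: coring_def core_written_def coreD_def cells_def intro!: map_cong)
  then show ?thesis
    unfolding write_core_def write_core_time_def
    by (rule htriple_seq[OF htriple_post[OF loop] init])
qed

definition padding :: "nat \<Rightarrow> (nat \<Rightarrow> nat) \<Rightarrow> bool" where
  "padding j m \<longleftrightarrow> ready m \<and> fillers_written m \<and> core_written m \<and> m (B0 + 15) = j \<and>
     cells m nsmall j = replicate j vpad \<and>
     cells m (nout + nsmall) j = map (\<lambda>q. 2 * vpad - npad + 1 + q) [0..<j]"

lemma padding_SucI:
  assumes inv: "padding j m" and "j < npad"
    and written: "m' (B0 + 15) = Suc j" "m' (Suc (nsmall + j)) = vpad"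
      "m' (Suc (nout + nsmall + j)) = 2 * vpad - npad + 1 + j"
    and frame: "\<forall>y. y \<notin> {B0 + 15, Suc (nsmall + j), Suc (nout + nsmall + j)} \<longrightarrow> m' y = m y"
  shows "padding (Suc j) m'"
proof -
  have x: "Suc (nsmall + j) \<le> nout" "Suc (nout + nsmall + j) < B0"
    using \<open>j < npad\<close> nsmall_eq layout_bounds by (simp_all add: nout_def)
  have "ready m'"
    using inv frame x by (subst ready_cong[of m' m]) (auto simp: padding_def ready_cells_def)
  moreover have "cells m' 0 (n * n) = cells m 0 (n * n)" "cells m' (nout + n) (n * n) = cells m (nout + n) (n * n)"
    "cells m' (n * n) n = cells m (n * n) n" "cells m' nout n = cells m nout n"
    "cells m' nsmall j = cells m nsmall j" "cells m' (nout + nsmall) j = cells m (nout + nsmall) j"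
    using x nsmall_eq layout_bounds by (auto intro!: cells_cong frame[rule_format])
  ultimately show ?thesis
    using inv written by (simp add: padding_def fillers_written_def core_written_def cells_Suc
        replicate_append_same)
qed

lemma pad_step_correct:
  assumes "j < npad"
  shows "htriple (padding j) pad_step 3 (padding (Suc j))"
  unfolding pad_step_def incr_def
  apply (rule htriple_time, rule htriple_pre, (rule htriple_seq htriple_assign)+)
  subgoal for m
  proof -
    assume inv: "padding j m"
    have regs: "m 0 = B0" "m (B0 + 7) = nsmall" "m (B0 + 8) = npad" "m (B0 + 9) = vpad"
      "m (B0 + 10) = nout" "m (B0 + 15) = j"
      using inv by (simp_all add: padding_def ready_def)
    have "Suc (nout + nsmall + j) < B0" "nsmall + j < nout" "npad \<le> 2 * vpad"
      using \<open>j < npad\<close> nsmall_eq layout_bounds by (simp_all add: nout_def vpad_def)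
    then show ?thesis
      apply (simp add: regs)
      apply (rule padding_SucI[OF inv assms])
      apply (simp_all add: regs add_ac)
      done
  qed
  by simp

definition write_padding_time :: nat where
  "write_padding_time = 1 + (npad * (3 + 1) + 1)"

lemma write_padding_correct:
  "htriple (\<lambda>m. ready m \<and> fillers_written m \<and> core_written m) write_padding write_padding_time
     (padding npad)"
proof -
  have init: "htriple (\<lambda>m. ready m \<and> fillers_written m \<and> core_written m) (Assign (RegA 15) (N 0)) 1
      (padding 0)"
    by (rule htriple_pre[OF htriple_assign])
      (use nsmall_eq layout_bounds in \<open>auto simp: padding_def ready_def unrank_tab_def cw_tab_def fillers_written_def
        core_written_def cells_upd\<close>)
  have loop: "htriple (padding 0) (While (Minus (Reg 8) (Reg 15)) pad_step) (npad * (3 + 1) + 1)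
      (padding npad)"
    by (rule htriple_while[where I = padding, OF pad_step_correct]) (auto simp: padding_def ready_def)
  show ?thesis
    unfolding write_padding_def write_padding_time_def by (rule htriple_seq[OF loop init])
qed

lemma set_length_correct:
  "htriple (padding npad) set_length 1 (\<lambda>m. out_D m = redD \<and> out_T m = redT)"
  unfolding set_length_def
proof (rule htriple_pre[OF htriple_assign])
  fix m assume "padding npad m"
  have nout: "nout = n * n + n + npad" "nout = n + n * n + npad"
    using nsmall_eq layout_bounds by (simp_all add: nout_def)
  have "cells m 0 (n * n + n + npad) = cells m 0 (n * n) @ cells m (n * n) n @ cells m (n * n + n) npad"
    "cells m nout (n + n * n + npad) = cells m nout n @ cells m (nout + n) (n * n) @ cells m (nout + n + n * n) npad"
    by (simp_all only: cells_add append_assoc add_0 add.assoc)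
  then have "cells m 0 nout = redD" "cells m nout nout = redT"
    using \<open>padding npad m\<close> nout
    by (simp_all add: padding_def fillers_written_def core_written_def redD_def redT_def nsmall_eq add_ac)
  moreover have "m (B0 + 10) = nout" "m 0 = B0"
    using \<open>padding npad m\<close> by (simp_all add: padding_def ready_def)
  ultimately show "(\<lambda>m. out_D m = redD \<and> out_T m = redT) (m(aval (N 0) m := aval (Reg 10) m))"
    by (simp add: out_D_eq_cells out_T_eq_cells cells_upd)
qed

definition reduction_time :: nat where
  "reduction_time = 2 + (K * (6 + 1) + 1 + 2) + (1 + ((2 + ((K + 1) * (3 + 1) + 1)) +
     ((1 + (2 * n * (2 + (2 * n * (5 + 1) + 1 + 2) + 1) + 1)) + ((3 + ((2 * n - 1) * (5 + 1) + 1 + 1)) +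
     (4 + (write_fillers_time + (write_core_time + (write_padding_time + 1))))))))"

theorem reduction_correct:
  "htriple (\<lambda>m. m = enc_in a t) reduction reduction_time (\<lambda>m. out_D m = redD \<and> out_T m = redT)"
  unfolding reduction_def reduction_time_def
  by (rule htriple_seq[OF _ set_base_correct], rule htriple_seq[OF _ set_K_correct],
      rule htriple_seq[OF _ mult_table_correct], rule htriple_seq[OF _ unrank_table_correct],
      rule htriple_seq[OF _ cw_table_correct], rule htriple_seq[OF _ set_sizes_correct],
      rule htriple_seq[OF _ write_fillers_correct], rule htriple_seq[OF _ write_core_correct],
      rule htriple_seq[OF set_length_correct write_padding_correct])

lemma reduction_time_le: "reduction_time \<le> 200 * K ^ 3"
proof -
  have "n < K" "1 \<le> K" "K \<le> K ^ 2" "K ^ 2 \<le> K ^ 3" "n * n \<le> K ^ 2" "nsmall \<le> K ^ 2"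
    by (simp_all add: K_def power2_eq_square power3_eq_cube nsmall_def mult_le_mono)
  moreover have "npad \<le> 2 * K ^ 2 + 2 * K + 4 * K ^ 3 + 2"
    using cmax_le \<open>nsmall \<le> K ^ 2\<close> \<open>n < K\<close> by (simp add: npad_def)
  moreover have "K * (6 + 1) = 7 * K" "(K + 1) * (3 + 1) = 4 * K + 4"
    "2 * n * (2 + (2 * n * (5 + 1) + 1 + 2) + 1) = 24 * (n * n) + 12 * n"
    "(2 * n - 1) * (5 + 1) \<le> 12 * n" "nsmall * (6 + 1) = 7 * nsmall" "2 * n * (5 + 1) = 12 * n"
    "npad * (3 + 1) = 4 * npad"
    by (simp_all add: algebra_simps)
  ultimately show ?thesis
    unfolding reduction_time_def write_fillers_time_def write_core_time_def write_padding_time_def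
    by linarith
qed

end

theorem theorem7:
  shows "\<exists>(prog :: com) (c :: nat) (k :: nat). \<forall>a t. in3dm_inst a t \<longrightarrow>
     (\<exists>steps m'. big_step prog (enc_in a t) steps m' \<and>
        steps \<le> c * (in3dm_size a t + 1) ^ k \<and>
        pm_inst (out_D m') (out_T m') \<and>
        (in3dm a t \<longleftrightarrow> pos_match (out_D m') (out_T m')))"
proof (rule exI[of _ reduction], rule exI[of _ 200], rule exI[of _ 3], intro allI impI)
  fix a t :: "nat list"
  assume "in3dm_inst a t"
  then interpret in3dm_instance a t
    by unfold_locales (simp add: in3dm_inst_def)
  obtain steps m' where run: "big_step reduction (enc_in a t) steps m'" "steps \<le> reduction_time"
    and out: "out_D m' = redD" "out_T m' = redT"
    using reduction_correct unfolding htriple_def by blast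
  have "K ^ 3 \<le> (in3dm_size a t + 1) ^ 3"
    by (rule power_mono) (simp_all add: K_def in3dm_size_def)
  then have "steps \<le> 200 * (in3dm_size a t + 1) ^ 3"
    using run(2) reduction_time_le by linarith
  moreover have "pm_inst (out_D m') (out_T m')" "in3dm a t \<longleftrightarrow> pos_match (out_D m') (out_T m')"
    using out pm_inst_red in3dm_iff_pos_match by simp_all
  ultimately show "\<exists>steps m'. big_step reduction (enc_in a t) steps m' \<and>
      steps \<le> 200 * (in3dm_size a t + 1) ^ 3 \<and> pm_inst (out_D m') (out_T m') \<and>
      (in3dm a t \<longleftrightarrow> pos_match (out_D m') (out_T m'))"
    using run(1) by blast
qed

end
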